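(* Let $\tau>1$. For every integer $\kappa\ge3$, $$\sup_{\substack{x^\dagger\in\mathcal X\\ \bar k^\delta_{\mathrm{pr}}(x^\dagger)\ge\kappa}}\mathbb P\Big(k^\delta_{\mathrm{dp}}<\infty\ \text{and}\ \|K(x^\delta_{k^\delta_{\mathrm{dp}}}-x^\dagger)\|\le C_\tau\min_{k\in\mathbb N_0}\|K(x^\delta_k-x^\dagger)\|\Big)\ \ge\ 1-\max\Big(\frac{12}{\tau^2+2\tau-3},9\Big)\,\mathbb E\Big[\Big|\frac1\kappa\sum_{j=1}^{\lceil\kappa/3\rceil}\big((Z,u_j)^2-1\big)\Big|\Big],$$ and the right-hand side tends to $1$ as $\kappa\to\infty$. Here $C_\tau:=\sqrt6\sqrt{\tfrac32(A_\tau+1)+B_\tau}$ with $A_\tau:=\big(\frac{\tau+1}{\tau-1}\big)^2$ and $B_\tau:=\frac{(3\tau+1)^2}{4}$. (Written "$\inf$" interpretation: the inequality holds for every $x^\dagger$ with $\bar k^\delta_{\mathrm{pr}}(x^\dagger)\ge\kappa$, uniformly in $\delta>0$.)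
   Context: Let $\mathcal X,\mathcal Y$ be infinite-dimensional real separable Hilbert spaces and $K:\mathcal X\to\mathcal Y$ a compact injective linear operator with dense range, with singular system $(\sigma_j,v_j,u_j)_{j\in\mathbb N}$: $(v_j)$, $(u_j)$ orthonormal bases of $\mathcal X$, $\mathcal Y$, $\sigma_1\ge\sigma_2\ge\dots>0$, $\sigma_j\to0$, $Kv_j=\sigma_ju_j$, $K^*u_j=\sigma_jv_j$. For $x^\dagger\in\mathcal X$ put $y^\dagger=Kx^\dagger$; $\delta>0$ is the noise level. The white noise $Z$ is a family of real random variables $(Z,y)$, $y\in\mathcal Y$, with $\mathbb E[(Z,y)]=0$, $\mathbb E[(Z,y)(Z,y')]=(y,y')$, $(Z,y)\overset{d}{=}\frac{\|y\|}{\|y'\|}(Z,y')$ ($y'\neq0$), and $(Z,u_j)$, $j\in\mathbb N$, independent. Data components: $(y^\delta,u_j):=(y^\dagger,u_j)+\delta(Z,u_j)$. Spectral cut-off: $x_k^\delta:=\sum_{j=1}^k\frac{(y^\delta,u_j)}{\sigma_j}v_j$, $k\in\mathbb N_0$. Modified discrepancy principle with parameter $\tau>1$: for $m\in\mathbb N$, $$k^\delta_{\mathrm{dp}}(m):=\min\Big\{k\in\{0,\dots,m\}:\ \sqrt{\textstyle\sum_{j=k+1}^m(y^\delta,u_j)^2}\le\tau\sqrt m\,\delta\Big\},\qquad k^\delta_{\mathrm{dp}}:=\sup_{m\in\mathbb N}k^\delta_{\mathrm{dp}}(m)\in\mathbb N_0\cup\{\infty\}.$$ The deterministic balancing index is $$\bar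 k^\delta_{\mathrm{pr}}(x^\dagger):=\min\Big\{k\in\mathbb N_0:\ \delta^2k\ge\sum_{j=k+1}^\infty(y^\dagger,u_j)^2\Big\}.$$ *)

theory Defs
  imports "HOL-Probability.Probability"
begin

text \<open>Coordinates w.r.t. the singular system (indices j \<ge> 1):
  a j = (x\<dagger>, v_j),  sv j = \<sv>_j,  Z j \<omega> = (Z,u_j)(\<omega>).
  Then (y\<dagger>,u_j) = sv j * a j, and (y\<delta>,u_j) = sv j * a j + \<delta> * Z j \<omega>.\<close>

definition ydag :: "(nat \<Rightarrow> real) \<Rightarrow> (nat \<Rightarrow> real) \<Rightarrow> nat \<Rightarrow> real" where
  "ydag sv a j = sv j * a j"

definition ydelta :: "(nat \<Rightarrow> real) \<Rightarrow> (nat \<Rightarrow> real) \<Rightarrow> real \<Rightarrow> (nat \<Rightarrow> 'w \<Rightarrow> real) \<Rightarrow> 'w \<Rightarrow> nat \<Rightarrow> real" where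
  "ydelta sv a \<delta> Z \<omega> j = ydag sv a j + \<delta> * Z j \<omega>"

text \<open>Coefficients (x_k^\<delta>, v_j) of the spectral cut-off solution.\<close>
definition xcut :: "(nat \<Rightarrow> real) \<Rightarrow> (nat \<Rightarrow> real) \<Rightarrow> real \<Rightarrow> (nat \<Rightarrow> 'w \<Rightarrow> real) \<Rightarrow> 'w \<Rightarrow> nat \<Rightarrow> nat \<Rightarrow> real" where
  "xcut sv a \<delta> Z \<omega> k j = (if 1 \<le> j \<and> j \<le> k then ydelta sv a \<delta> Z \<omega> j / sv j else 0)"

text \<open>\<parallel>K(x_k^\<delta> - x\<dagger>)\<parallel>, computed by Parseval in the basis (u_j):
  (K x, u_j) = sv j * (x, v_j).\<close>
definition err :: "(nat \<Rightarrow> real) \<Rightarrow> (nat \<Rightarrow> real) \<Rightarrow> real \<Rightarrow> (nat \<Rightarrow> 'w \<Rightarrow> real) \<Rightarrow> 'w \<Rightarrow> nat \<Rightarrow> real" where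
  "err sv a \<delta> Z \<omega> k =
     sqrt (infsum (\<lambda>j. (sv j * (xcut sv a \<delta> Z \<omega> k j - a j))\<^sup>2) {1..})"

definition kdp_m :: "real \<Rightarrow> (nat \<Rightarrow> real) \<Rightarrow> (nat \<Rightarrow> real) \<Rightarrow> real \<Rightarrow> (nat \<Rightarrow> 'w \<Rightarrow> real) \<Rightarrow> 'w \<Rightarrow> nat \<Rightarrow> nat" where
  "kdp_m \<tau> sv a \<delta> Z \<omega> m =
     (LEAST k. k \<le> m \<and>
        sqrt (\<Sum>j\<in>{k<..m}. (ydelta sv a \<delta> Z \<omega> j)\<^sup>2) \<le> \<tau> * sqrt (real m) * \<delta>)"

definition kdp :: "real \<Rightarrow> (nat \<Rightarrow> real) \<Rightarrow> (nat \<Rightarrow> real) \<Rightarrow> real \<Rightarrow> (nat \<Rightarrow> 'w \<Rightarrow> real) \<Rightarrow> 'w \<Rightarrow> enat" where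
  "kdp \<tau> sv a \<delta> Z \<omega> = (SUP m\<in>{1..}. enat (kdp_m \<tau> sv a \<delta> Z \<omega> m))"

definition kpr :: "(nat \<Rightarrow> real) \<Rightarrow> (nat \<Rightarrow> real) \<Rightarrow> real \<Rightarrow> nat" where
  "kpr sv a \<delta> = (LEAST k. \<delta>\<^sup>2 * real k \<ge> infsum (\<lambda>j. (ydag sv a j)\<^sup>2) {k<..})"

definition A_tau :: "real \<Rightarrow> real" where "A_tau \<tau> = ((\<tau> + 1) / (\<tau> - 1))\<^sup>2"
definition B_tau :: "real \<Rightarrow> real" where "B_tau \<tau> = (3 * \<tau> + 1)\<^sup>2 / 4"
definition C_tau :: "real \<Rightarrow> real" where
  "C_tau \<tau> = sqrt 6 * sqrt (3 / 2 * (A_tau \<tau> + 1) + B_tau \<tau>)"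

definition rhs :: "'w measure \<Rightarrow> (nat \<Rightarrow> 'w \<Rightarrow> real) \<Rightarrow> real \<Rightarrow> nat \<Rightarrow> real" where
  "rhs M Z \<tau> \<kappa> = 1 - max (12 / (\<tau>\<^sup>2 + 2 * \<tau> - 3)) 9 *
     (\<integral>\<omega>. \<bar>(1 / real \<kappa>) * (\<Sum>j=1..nat \<lceil>real \<kappa> / 3\<rceil>. ((Z j \<omega>)\<^sup>2 - 1))\<bar> \<partial>M)"

end

theory Submission
  imports Defs
begin

(* On the event that the normalised noise energies (1/m) sum_{j<=m} (Z,u_j)^2 stay within a fixed
   relative tolerance of 1 for all m >= ceil(kappa/3), the oracle inequality is deterministic.  By
   Parseval the squared error of the cut-off at k is delta^2 sum_{j<=k} (Z,u_j)^2 + sum_{j>k} (y,u_j)^2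
   with y the exact data; it is at least (2/3) delta^2 kbar for every k, kbar being the balancing
   index, while the discrepancy principle stops at an index of order A_tau kbar whose residual is
   O(delta^2 kbar).
   The complementary event is controlled by a maximal inequality for the running means of the
   i.i.d. sequence (Z,u_j)^2 - 1, which exchangeability turns into a reverse martingale, together
   with the weak law of large numbers in L^1, proved by truncation. *)

section \<open>Residuals, noise energy and the discrepancy principle\<close>

definition residual :: "(nat \<Rightarrow> real) \<Rightarrow> (nat \<Rightarrow> real) \<Rightarrow> nat \<Rightarrow> real" where
  "residual sv a k = infsum (\<lambda>j. (ydag sv a j)\<^sup>2) {k<..}"

definition noise_energy :: "(nat \<Rightarrow> 'w \<Rightarrow> real) \<Rightarrow> 'w \<Rightarrow> nat \<Rightarrow> real" where
  "noise_energy Z \<omega> k = (\<Sum>j=1..k. (Z j \<omega>)\<^sup>2)"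

lemma summable_on_ydag_sq:
  assumes sv_pos: "\<And>j. j \<ge> 1 \<Longrightarrow> sv j > 0"
    and sv_mono: "\<And>i j. 1 \<le> i \<Longrightarrow> i \<le> j \<Longrightarrow> sv j \<le> sv i"
    and a: "(\<lambda>j. (a j)\<^sup>2) summable_on {1..}"
  shows "(\<lambda>j. (ydag sv a j)\<^sup>2) summable_on {1..}"
proof -
  have "(\<lambda>j. (sv 1)\<^sup>2 * (a j)\<^sup>2) summable_on {1..}"
    using a by (rule summable_on_cmult_right)
  then show ?thesis
  proof (rule summable_on_comparison_test)
    fix j :: nat assume "j \<in> {1..}"
    then have "(sv j)\<^sup>2 \<le> (sv 1)\<^sup>2"
      using sv_pos[of j] sv_mono[of 1 j] by (auto intro!: power_mono)
    then show "(ydag sv a j)\<^sup>2 \<le> (sv 1)\<^sup>2 * (a j)\<^sup>2"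
      by (simp add: ydag_def power_mult_distrib mult_right_mono)
  qed simp
qed

lemma residual_nonneg: "residual sv a k \<ge> 0"
  unfolding residual_def by (rule infsum_nonneg) simp

lemma residual_split:
  assumes summable: "(\<lambda>j. (ydag sv a j)\<^sup>2) summable_on {1..}" and "k \<le> m"
  shows "residual sv a k = (\<Sum>j\<in>{k<..m}. (ydag sv a j)\<^sup>2) + residual sv a m"
proof -
  have "{k<..} = {k<..m} \<union> {m<..}" using \<open>k \<le> m\<close> by auto
  moreover have "(\<lambda>j. (ydag sv a j)\<^sup>2) summable_on {m<..}"
    by (rule summable_on_subset[OF summable]) auto
  then have "infsum (\<lambda>j. (ydag sv a j)\<^sup>2) ({k<..m} \<union> {m<..}) =
      infsum (\<lambda>j. (ydag sv a j)\<^sup>2) {k<..m} + infsum (\<lambda>j. (ydag sv a j)\<^sup>2) {m<..}"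
    by (intro infsum_Un_disjoint) auto
  ultimately show ?thesis
    unfolding residual_def by simp
qed

lemma residual_antimono:
  assumes "(\<lambda>j. (ydag sv a j)\<^sup>2) summable_on {1..}" and "k \<le> m"
  shows "residual sv a m \<le> residual sv a k"
  using residual_split[OF assms] by (simp add: sum_nonneg)

lemma noise_energy_nonneg: "noise_energy Z \<omega> k \<ge> 0"
  unfolding noise_energy_def by (simp add: sum_nonneg)

lemma noise_energy_split:
  assumes "k \<le> m"
  shows "noise_energy Z \<omega> m = noise_energy Z \<omega> k + (\<Sum>j\<in>{k<..m}. (Z j \<omega>)\<^sup>2)"
proof -
  have "{1..m} = {1..k} \<union> {k<..m}" using assms by auto
  then have "noise_energy Z \<omega> m = (\<Sum>j\<in>{1..k} \<union> {k<..m}. (Z j \<omega>)\<^sup>2)"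
    unfolding noise_energy_def by (rule arg_cong)
  also have "\<dots> = noise_energy Z \<omega> k + (\<Sum>j\<in>{k<..m}. (Z j \<omega>)\<^sup>2)"
    unfolding noise_energy_def by (rule sum.union_disjoint) auto
  finally show ?thesis .
qed

lemma noise_energy_mono: "k \<le> m \<Longrightarrow> noise_energy Z \<omega> k \<le> noise_energy Z \<omega> m"
  using noise_energy_split[of k m Z \<omega>] by (simp add: sum_nonneg)

text \<open>Parseval: on the first \<open>k\<close> coefficients only the noise survives, beyond \<open>k\<close> only the data.\<close>
lemma err_eq_sqrt:
  assumes sv_pos: "\<And>j. j \<ge> 1 \<Longrightarrow> sv j > 0"
    and summable: "(\<lambda>j. (ydag sv a j)\<^sup>2) summable_on {1..}"
  shows "err sv a \<delta> Z \<omega> k = sqrt (\<delta>\<^sup>2 * noise_energy Z \<omega> k + residual sv a k)"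
proof -
  let ?f = "\<lambda>j. (sv j * (xcut sv a \<delta> Z \<omega> k j - a j))\<^sup>2"
  have head: "sum ?f {1..k} = \<delta>\<^sup>2 * noise_energy Z \<omega> k"
    unfolding noise_energy_def sum_distrib_left
  proof (rule sum.cong)
    fix j assume "j \<in> {1..k}"
    with sv_pos[of j] show "?f j = \<delta>\<^sup>2 * (Z j \<omega>)\<^sup>2"
      by (simp add: xcut_def ydelta_def ydag_def field_simps power_mult_distrib)
  qed simp
  have tail: "?f j = (ydag sv a j)\<^sup>2" if "j \<in> {k<..}" for j
    using that by (simp add: xcut_def ydag_def power_mult_distrib)
  have "(\<lambda>j. (ydag sv a j)\<^sup>2) summable_on {k<..}"
    by (rule summable_on_subset[OF summable]) auto
  then have "?f summable_on {k<..}"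
    by (subst summable_on_cong[OF tail])
  then have "infsum ?f ({1..k} \<union> {k<..}) = sum ?f {1..k} + infsum ?f {k<..}"
    by (subst infsum_Un_disjoint) auto
  moreover have "{1..k} \<union> {k<..} = {1..}" by auto
  moreover have "infsum ?f {k<..} = residual sv a k"
    unfolding residual_def by (rule infsum_cong[OF tail])
  ultimately show ?thesis
    unfolding err_def head by (simp only:)
qed

lemma kpr_balanced:
  assumes summable: "(\<lambda>j. (ydag sv a j)\<^sup>2) summable_on {1..}" and "\<delta> > 0"
  shows "residual sv a (kpr sv a \<delta>) \<le> \<delta>\<^sup>2 * kpr sv a \<delta>"
proof -
  define k where "k = nat \<lceil>residual sv a 0 / \<delta>\<^sup>2\<rceil>"
  have "residual sv a 0 / \<delta>\<^sup>2 \<le> k" unfolding k_def by linarith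
  then have "residual sv a 0 \<le> \<delta>\<^sup>2 * k"
    using \<open>\<delta> > 0\<close> by (simp add: field_simps)
  then have "residual sv a k \<le> \<delta>\<^sup>2 * k"
    using residual_antimono[OF summable, of 0 k] by simp
  then show ?thesis
    unfolding kpr_def residual_def[symmetric] by (rule LeastI)
qed

lemma less_kpr_unbalanced: "k < kpr sv a \<delta> \<Longrightarrow> \<delta>\<^sup>2 * k < residual sv a k"
  unfolding kpr_def residual_def[symmetric] by (meson not_less not_less_Least)

lemma sqrt_le_discrepancy_iff:
  assumes "\<tau> \<ge> 0" "\<delta> \<ge> 0"
  shows "sqrt D \<le> \<tau> * sqrt (real m) * \<delta> \<longleftrightarrow> D \<le> \<tau>\<^sup>2 * real m * \<delta>\<^sup>2"
proof -
  have "\<tau> * sqrt (real m) * \<delta> = sqrt (\<tau>\<^sup>2 * real m * \<delta>\<^sup>2)"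
    using assms by (simp add: real_sqrt_mult)
  then show ?thesis by simp
qed

lemma kdp_m_eq_Least:
  assumes "\<tau> \<ge> 0" "\<delta> \<ge> 0"
  shows "kdp_m \<tau> sv a \<delta> Z \<omega> m =
    (LEAST k. k \<le> m \<and> (\<Sum>j\<in>{k<..m}. (ydelta sv a \<delta> Z \<omega> j)\<^sup>2) \<le> \<tau>\<^sup>2 * real m * \<delta>\<^sup>2)"
  unfolding kdp_m_def sqrt_le_discrepancy_iff[OF assms] ..

lemma kdp_m_le:
  assumes "\<tau> \<ge> 0" "\<delta> \<ge> 0" and "k \<le> m"
    and "(\<Sum>j\<in>{k<..m}. (ydelta sv a \<delta> Z \<omega> j)\<^sup>2) \<le> \<tau>\<^sup>2 * real m * \<delta>\<^sup>2"
  shows "kdp_m \<tau> sv a \<delta> Z \<omega> m \<le> k"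
  unfolding kdp_m_eq_Least[OF assms(1,2)] by (rule Least_le) (use assms in simp)

lemma kdp_m_spec:
  assumes "\<tau> \<ge> 0" "\<delta> \<ge> 0"
  shows "kdp_m \<tau> sv a \<delta> Z \<omega> m \<le> m \<and>
    (\<Sum>j\<in>{kdp_m \<tau> sv a \<delta> Z \<omega> m<..m}. (ydelta sv a \<delta> Z \<omega> j)\<^sup>2) \<le> \<tau>\<^sup>2 * real m * \<delta>\<^sup>2"
  unfolding kdp_m_eq_Least[OF assms] by (rule LeastI[of _ m]) (use assms in simp)

lemma enat_kdp_m_le_kdp: "1 \<le> m \<Longrightarrow> enat (kdp_m \<tau> sv a \<delta> Z \<omega> m) \<le> kdp \<tau> sv a \<delta> Z \<omega>"
  unfolding kdp_def by (rule SUP_upper) simp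

lemma kdp_le_enat:
  "(\<And>m. 1 \<le> m \<Longrightarrow> kdp_m \<tau> sv a \<delta> Z \<omega> m \<le> N) \<Longrightarrow> kdp \<tau> sv a \<delta> Z \<omega> \<le> enat N"
  unfolding kdp_def by (rule SUP_least) simp

lemma kdp_eq_enat_iff:
  "kdp \<tau> sv a \<delta> Z \<omega> = enat K \<longleftrightarrow>
    (\<forall>m\<ge>1. kdp_m \<tau> sv a \<delta> Z \<omega> m \<le> K) \<and> (\<exists>m\<ge>1. kdp_m \<tau> sv a \<delta> Z \<omega> m = K)"
  (is "?L \<longleftrightarrow> ?R")
proof
  let ?k = "kdp_m \<tau> sv a \<delta> Z \<omega>"
  assume L: ?L
  then have le: "\<forall>m\<ge>1. ?k m \<le> K"
    using enat_kdp_m_le_kdp[of _ \<tau> sv a \<delta> Z \<omega>] by simp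
  moreover have "\<exists>m\<ge>1. ?k m = K"
  proof (rule ccontr)
    assume none: "\<not> ?thesis"
    have lt: "?k m < K" if "m \<ge> 1" for m using le none that by (simp add: order_less_le)
    moreover have "K > 0" using lt[of 1] by simp
    ultimately have "kdp \<tau> sv a \<delta> Z \<omega> \<le> enat (K - 1)"
      by (intro kdp_le_enat) (simp add: less_Suc_eq_le[symmetric])
    then show False using L lt[of 1] by simp
  qed
  ultimately show ?R by blast
next
  assume R: ?R
  then obtain m where "m \<ge> 1" and m: "kdp_m \<tau> sv a \<delta> Z \<omega> m = K" by blast
  then have "enat K \<le> kdp \<tau> sv a \<delta> Z \<omega>"
    using enat_kdp_m_le_kdp[of m \<tau> sv a \<delta> Z \<omega>] by (simp add: m)
  moreover have "kdp \<tau> sv a \<delta> Z \<omega> \<le> enat K" using R by (intro kdp_le_enat) simp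
  ultimately show ?L by simp
qed

section \<open>The deterministic oracle inequality\<close>

lemma power2_add_le_weighted:
  fixes x y p :: real
  assumes "p > 0"
  shows "(x + y)\<^sup>2 \<le> (1 + p) * x\<^sup>2 + (1 + 1 / p) * y\<^sup>2"
proof -
  have "0 \<le> (p * x - y)\<^sup>2 / p" using assms by simp
  also have "\<dots> = p * x\<^sup>2 + y\<^sup>2 / p - 2 * x * y"
    using assms by (simp add: field_simps power2_eq_square)
  finally show ?thesis by (simp add: algebra_simps power2_eq_square)
qed

lemma A_tau_eq:
  assumes "\<tau> > 1"
  shows "A_tau \<tau> = 1 + 4 * \<tau> / (\<tau> - 1)\<^sup>2"
proof -
  have "(\<tau> + 1)\<^sup>2 = (\<tau> - 1)\<^sup>2 + 4 * \<tau>" by (simp add: power2_eq_square algebra_simps)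
  then show ?thesis
    using assms unfolding A_tau_def power_divide by (simp add: add_divide_distrib)
qed

lemma A_tau_ge_1: "\<tau> > 1 \<Longrightarrow> 1 \<le> A_tau \<tau>"
  by (simp add: A_tau_eq)

lemma C_tau_nonneg: "C_tau \<tau> \<ge> 0"
  unfolding C_tau_def A_tau_def B_tau_def
  by (intro mult_nonneg_nonneg real_sqrt_ge_zero add_nonneg_nonneg) auto

lemma C_tau_sq_bound:
  assumes "\<tau> > 1"
  shows "3 / 2 * (4 / 3 * A_tau \<tau> + 2 * \<tau>\<^sup>2 + 11 / 3) \<le> (C_tau \<tau>)\<^sup>2"
proof -
  have A: "A_tau \<tau> \<ge> 1" using A_tau_ge_1[OF assms] .
  have B: "B_tau \<tau> = (9 * \<tau>\<^sup>2 + 6 * \<tau> + 1) / 4"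
    unfolding B_tau_def by (simp add: power2_eq_square algebra_simps)
  have C: "(C_tau \<tau>)\<^sup>2 = 6 * (3 / 2 * (A_tau \<tau> + 1) + B_tau \<tau>)"
    using A unfolding C_tau_def B_tau_def power_mult_distrib by simp
  show ?thesis
    unfolding C B using A assms zero_le_power2[of \<tau>] by (simp add: field_simps)
qed

locale good_noise =
  fixes sv a :: "nat \<Rightarrow> real" and \<delta> \<tau> e :: real and Z :: "nat \<Rightarrow> 'w \<Rightarrow> real" and \<omega> :: 'w
    and n :: nat
  assumes sv_pos: "\<And>j. j \<ge> 1 \<Longrightarrow> sv j > 0"
    and summable: "(\<lambda>j. (ydag sv a j)\<^sup>2) summable_on {1..}"
    and delta_pos: "\<delta> > 0"
    and tau_gt_1: "\<tau> > 1"
    and e_le_third: "e \<le> 1 / 3" and e_le_tau: "e \<le> (\<tau>\<^sup>2 + 2 * \<tau> - 3) / 4"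
    and n_le_kpr: "n \<le> kpr sv a \<delta>" and kpr_ge_3: "3 \<le> kpr sv a \<delta>"
    and noise_energy_close: "\<And>m. n \<le> m \<Longrightarrow> \<bar>noise_energy Z \<omega> m - m\<bar> \<le> e * m"
begin

abbreviation kbar :: nat where "kbar \<equiv> kpr sv a \<delta>"

lemma tau_delta_nonneg: "\<tau> \<ge> 0" "\<delta> \<ge> 0"
  using tau_gt_1 delta_pos by auto

lemma noise_energy_ge: "n \<le> m \<Longrightarrow> 2 / 3 * m \<le> noise_energy Z \<omega> m"
  using noise_energy_close[of m] mult_right_mono[OF e_le_third, of "real m"]
  by (simp add: abs_le_iff)

lemma noise_energy_le: "n \<le> m \<Longrightarrow> noise_energy Z \<omega> m \<le> (1 + e) * m"
  using noise_energy_close[of m] by (simp add: abs_le_iff algebra_simps)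

lemma noise_energy_le_max_kbar: "noise_energy Z \<omega> m \<le> 4 / 3 * max m kbar"
proof -
  have "noise_energy Z \<omega> m \<le> noise_energy Z \<omega> (max m n)" by (rule noise_energy_mono) simp
  also have "\<dots> \<le> (1 + e) * max m n" by (rule noise_energy_le) simp
  also have "\<dots> \<le> 4 / 3 * max m kbar"
    using e_le_third n_le_kpr by (intro mult_mono) auto
  finally show ?thesis .
qed

lemma err_ge: "sqrt (2 / 3 * \<delta>\<^sup>2 * kbar) \<le> err sv a \<delta> Z \<omega> k"
proof -
  have "2 / 3 * \<delta>\<^sup>2 * kbar \<le> \<delta>\<^sup>2 * noise_energy Z \<omega> k + residual sv a k"
  proof (cases "kbar \<le> k")
    case True
    then have "2 / 3 * kbar \<le> noise_energy Z \<omega> k"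
      using noise_energy_ge[of k] n_le_kpr by simp
    then show ?thesis
      using mult_left_mono[of _ _ "\<delta>\<^sup>2"] residual_nonneg[of sv a k] by fastforce
  next
    case False
    have "\<delta>\<^sup>2 * (2 / 3 * kbar) \<le> \<delta>\<^sup>2 * (kbar - 1)"
      using kpr_ge_3 by (intro mult_left_mono) auto
    also have "\<dots> < residual sv a (kbar - 1)"
      using less_kpr_unbalanced[of "kbar - 1"] kpr_ge_3 by (simp add: of_nat_diff)
    also have "\<dots> \<le> residual sv a k"
      using False by (intro residual_antimono[OF summable]) simp
    moreover have "0 \<le> \<delta>\<^sup>2 * noise_energy Z \<omega> k" by (simp add: noise_energy_nonneg)
    ultimately show ?thesis by simp
  qed
  then have "sqrt (2 / 3 * \<delta>\<^sup>2 * kbar) \<le> sqrt (\<delta>\<^sup>2 * noise_energy Z \<omega> k + residual sv a k)"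
    by (rule real_sqrt_le_mono)
  then show ?thesis using err_eq_sqrt[OF sv_pos summable, of \<delta> Z \<omega> k] by simp
qed

text \<open>Young's inequality with weight \<open>p = (\<tau> + 1) / (\<tau> - 1)\<close> splits the data into signal and
  noise; this weight makes the two contributions add up to exactly \<open>\<tau>\<^sup>2 m \<delta>\<^sup>2\<close>.\<close>
lemma discrepancy_at_kbar:
  assumes "kbar \<le> m" and "4 * kbar \<le> (\<tau> - 1)\<^sup>2 * m"
  shows "(\<Sum>j\<in>{kbar<..m}. (ydelta sv a \<delta> Z \<omega> j)\<^sup>2) \<le> \<tau>\<^sup>2 * m * \<delta>\<^sup>2"
proof -
  define p where "p = (\<tau> + 1) / (\<tau> - 1)"
  have p_pos: "p > 0" and p1: "1 + p = 2 * \<tau> / (\<tau> - 1)" and p2: "1 + 1 / p = 2 * \<tau> / (\<tau> + 1)"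
    using tau_gt_1 by (auto simp: p_def field_simps)
  have noise: "noise_energy Z \<omega> m \<le> (\<tau> + 1)\<^sup>2 / 4 * m"
  proof -
    have "noise_energy Z \<omega> m \<le> (1 + e) * m"
      using assms(1) n_le_kpr by (intro noise_energy_le) simp
    also have "\<dots> \<le> (\<tau> + 1)\<^sup>2 / 4 * m"
      using e_le_tau by (intro mult_right_mono) (auto simp: power2_eq_square field_simps)
    finally show ?thesis .
  qed
  have "(\<Sum>j\<in>{kbar<..m}. (ydelta sv a \<delta> Z \<omega> j)\<^sup>2)
      \<le> (\<Sum>j\<in>{kbar<..m}. (1 + p) * (ydag sv a j)\<^sup>2 + (1 + 1 / p) * (\<delta> * Z j \<omega>)\<^sup>2)"
    unfolding ydelta_def by (intro sum_mono power2_add_le_weighted p_pos)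
  also have "\<dots> = (1 + p) * (residual sv a kbar - residual sv a m)
      + (1 + 1 / p) * \<delta>\<^sup>2 * (noise_energy Z \<omega> m - noise_energy Z \<omega> kbar)"
    using residual_split[OF summable assms(1)] noise_energy_split[OF assms(1), of Z \<omega>]
    by (simp add: sum.distrib sum_distrib_left power_mult_distrib mult.assoc)
  also have "\<dots> \<le> (1 + p) * (\<delta>\<^sup>2 * kbar) + (1 + 1 / p) * \<delta>\<^sup>2 * ((\<tau> + 1)\<^sup>2 / 4 * m)"
    using kpr_balanced[OF summable delta_pos] residual_nonneg[of sv a m] noise
      noise_energy_nonneg[of Z \<omega> kbar] p_pos
    by (intro add_mono mult_left_mono) auto
  also have "\<dots> \<le> (1 + p) * (\<delta>\<^sup>2 * ((\<tau> - 1)\<^sup>2 * m / 4)) + (1 + 1 / p) * \<delta>\<^sup>2 * ((\<tau> + 1)\<^sup>2 / 4 * m)"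
    using assms(2) p_pos by (intro add_mono mult_left_mono) auto
  also have "\<dots> = ((1 + p) * ((\<tau> - 1)\<^sup>2 / 4) + (1 + 1 / p) * ((\<tau> + 1)\<^sup>2 / 4)) * m * \<delta>\<^sup>2"
    by (simp add: field_simps)
  also have "(1 + p) * ((\<tau> - 1)\<^sup>2 / 4) + (1 + 1 / p) * ((\<tau> + 1)\<^sup>2 / 4) = \<tau>\<^sup>2"
  proof -
    have "\<tau> - 1 \<noteq> 0" "\<tau> + 1 \<noteq> 0" using tau_gt_1 by auto
    then have "2 * \<tau> / (\<tau> - 1) * ((\<tau> - 1)\<^sup>2 / 4) = \<tau> * (\<tau> - 1) / 2"
      and "2 * \<tau> / (\<tau> + 1) * ((\<tau> + 1)\<^sup>2 / 4) = \<tau> * (\<tau> + 1) / 2"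
      by (simp_all add: power2_eq_square field_simps)
    then show ?thesis unfolding p1 p2 by (simp only:) (simp add: power2_eq_square field_simps)
  qed
  finally show ?thesis .
qed

lemma kbar_le_A_kbar: "real kbar \<le> A_tau \<tau> * kbar"
  using mult_right_mono[OF A_tau_ge_1[OF tau_gt_1], of "real kbar"] by simp

lemma kdp_m_le_A_kbar: "kdp_m \<tau> sv a \<delta> Z \<omega> m \<le> A_tau \<tau> * kbar"
proof (cases "kbar \<le> m \<and> 4 * kbar \<le> (\<tau> - 1)\<^sup>2 * m")
  case True
  then have "kdp_m \<tau> sv a \<delta> Z \<omega> m \<le> kbar"
    using discrepancy_at_kbar by (intro kdp_m_le tau_delta_nonneg) auto
  then show ?thesis using kbar_le_A_kbar by linarith
next
  case False
  have "real m \<le> A_tau \<tau> * kbar"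
  proof (cases "kbar \<le> m")
    case True
    with False have "m < 4 * real kbar / (\<tau> - 1)\<^sup>2"
      using tau_gt_1 by (simp add: field_simps)
    also have "\<dots> \<le> 4 * \<tau> * kbar / (\<tau> - 1)\<^sup>2"
      using tau_gt_1 mult_right_mono[of 1 \<tau> "real kbar"] by (intro divide_right_mono) auto
    finally show ?thesis
      unfolding A_tau_eq[OF tau_gt_1] distrib_right by simp
  next
    case False
    then show ?thesis using kbar_le_A_kbar by linarith
  qed
  then show ?thesis
    using kdp_m_spec[OF tau_delta_nonneg, of sv a Z \<omega> m] by linarith
qed

lemma residual_kdp_m_kbar:
  "residual sv a (kdp_m \<tau> sv a \<delta> Z \<omega> kbar) \<le> (2 * \<tau>\<^sup>2 + 11 / 3) * \<delta>\<^sup>2 * kbar"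
proof -
  define k where "k = kdp_m \<tau> sv a \<delta> Z \<omega> kbar"
  have k: "k \<le> kbar" and D: "(\<Sum>j\<in>{k<..kbar}. (ydelta sv a \<delta> Z \<omega> j)\<^sup>2) \<le> \<tau>\<^sup>2 * kbar * \<delta>\<^sup>2"
    using kdp_m_spec[OF tau_delta_nonneg, of sv a Z \<omega> kbar] unfolding k_def by auto
  have "(\<Sum>j\<in>{k<..kbar}. (ydag sv a j)\<^sup>2)
      \<le> (\<Sum>j\<in>{k<..kbar}. 2 * (ydelta sv a \<delta> Z \<omega> j)\<^sup>2 + 2 * (\<delta> * Z j \<omega>)\<^sup>2)"
  proof (rule sum_mono)
    fix j
    show "(ydag sv a j)\<^sup>2 \<le> 2 * (ydelta sv a \<delta> Z \<omega> j)\<^sup>2 + 2 * (\<delta> * Z j \<omega>)\<^sup>2"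
      using power2_add_le_weighted[of 1 "ydelta sv a \<delta> Z \<omega> j" "- \<delta> * Z j \<omega>"]
      by (simp add: ydelta_def)
  qed
  also have "\<dots> = 2 * (\<Sum>j\<in>{k<..kbar}. (ydelta sv a \<delta> Z \<omega> j)\<^sup>2)
      + 2 * \<delta>\<^sup>2 * (noise_energy Z \<omega> kbar - noise_energy Z \<omega> k)"
    using noise_energy_split[OF k, of Z \<omega>]
    by (simp add: sum.distrib sum_distrib_left power_mult_distrib mult.assoc)
  also have "\<dots> \<le> 2 * (\<tau>\<^sup>2 * kbar * \<delta>\<^sup>2) + 2 * \<delta>\<^sup>2 * (4 / 3 * kbar)"
    using D noise_energy_le_max_kbar[of kbar] noise_energy_nonneg[of Z \<omega> k]
    by (intro add_mono mult_left_mono) auto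
  finally show ?thesis
    using residual_split[OF summable k] kpr_balanced[OF summable delta_pos]
    unfolding k_def[symmetric] by (simp add: algebra_simps)
qed

lemma kdp_finite:
  obtains K where "kdp \<tau> sv a \<delta> Z \<omega> = enat K"
    and "kdp_m \<tau> sv a \<delta> Z \<omega> kbar \<le> K" and "K \<le> A_tau \<tau> * kbar"
proof -
  have "kdp \<tau> sv a \<delta> Z \<omega> \<le> enat (nat \<lceil>A_tau \<tau> * kbar\<rceil>)"
  proof (rule kdp_le_enat)
    fix m
    have "real (kdp_m \<tau> sv a \<delta> Z \<omega> m) \<le> real (nat \<lceil>A_tau \<tau> * kbar\<rceil>)"
      using kdp_m_le_A_kbar[of m] real_nat_ceiling_ge[of "A_tau \<tau> * kbar"] by linarith
    then show "kdp_m \<tau> sv a \<delta> Z \<omega> m \<le> nat \<lceil>A_tau \<tau> * kbar\<rceil>"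
      by (simp only: of_nat_le_iff)
  qed
  then obtain K where K: "kdp \<tau> sv a \<delta> Z \<omega> = enat K"
    by (cases "kdp \<tau> sv a \<delta> Z \<omega>") auto
  moreover have "enat (kdp_m \<tau> sv a \<delta> Z \<omega> kbar) \<le> kdp \<tau> sv a \<delta> Z \<omega>"
    using kpr_ge_3 by (intro enat_kdp_m_le_kdp) simp
  moreover obtain m where "kdp_m \<tau> sv a \<delta> Z \<omega> m = K"
    using K unfolding kdp_eq_enat_iff by blast
  ultimately show ?thesis
    using kdp_m_le_A_kbar[of m] that[of K] by simp
qed

theorem oracle_inequality:
  "kdp \<tau> sv a \<delta> Z \<omega> < \<infinity> \<and>
    err sv a \<delta> Z \<omega> (the_enat (kdp \<tau> sv a \<delta> Z \<omega>)) \<le> C_tau \<tau> * (INF k. err sv a \<delta> Z \<omega> k)"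
proof -
  obtain K where K: "kdp \<tau> sv a \<delta> Z \<omega> = enat K"
    and k_le_K: "kdp_m \<tau> sv a \<delta> Z \<omega> kbar \<le> K" and K_le: "K \<le> A_tau \<tau> * kbar"
    by (rule kdp_finite)
  have "noise_energy Z \<omega> K \<le> 4 / 3 * (A_tau \<tau> * kbar)"
    using noise_energy_le_max_kbar[of K] K_le kbar_le_A_kbar by linarith
  then have "\<delta>\<^sup>2 * noise_energy Z \<omega> K \<le> \<delta>\<^sup>2 * (4 / 3 * (A_tau \<tau> * kbar))"
    by (rule mult_left_mono) simp
  moreover have "residual sv a K \<le> (2 * \<tau>\<^sup>2 + 11 / 3) * \<delta>\<^sup>2 * kbar"
    using residual_antimono[OF summable k_le_K] residual_kdp_m_kbar by linarith
  ultimately have "\<delta>\<^sup>2 * noise_energy Z \<omega> K + residual sv a K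
      \<le> \<delta>\<^sup>2 * (4 / 3 * (A_tau \<tau> * kbar)) + (2 * \<tau>\<^sup>2 + 11 / 3) * \<delta>\<^sup>2 * kbar"
    by linarith
  also have "\<dots> = 3 / 2 * (4 / 3 * A_tau \<tau> + 2 * \<tau>\<^sup>2 + 11 / 3) * (2 / 3 * \<delta>\<^sup>2 * kbar)"
    by (simp add: algebra_simps)
  also have "\<dots> \<le> (C_tau \<tau>)\<^sup>2 * (2 / 3 * \<delta>\<^sup>2 * kbar)"
    by (rule mult_right_mono[OF C_tau_sq_bound[OF tau_gt_1]]) simp
  finally have "err sv a \<delta> Z \<omega> K \<le> sqrt ((C_tau \<tau>)\<^sup>2 * (2 / 3 * \<delta>\<^sup>2 * kbar))"
    using err_eq_sqrt[OF sv_pos summable, of \<delta> Z \<omega> K] real_sqrt_le_mono by simp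
  also have "\<dots> = C_tau \<tau> * sqrt (2 / 3 * \<delta>\<^sup>2 * kbar)"
    unfolding real_sqrt_mult real_sqrt_abs abs_of_nonneg[OF C_tau_nonneg] ..
  also have "\<dots> \<le> C_tau \<tau> * (INF k. err sv a \<delta> Z \<omega> k)"
    by (intro mult_left_mono[OF _ C_tau_nonneg] cINF_greatest) (blast intro: err_ge)+
  finally show ?thesis using K by simp
qed

end

section \<open>A maximal inequality for running means of i.i.d. sequences\<close>

definition sample_mean :: "(nat \<Rightarrow> real) \<Rightarrow> nat \<Rightarrow> real" where
  "sample_mean x m = (\<Sum>l=1..m. x l) / m"

lemma sample_mean_restrict: "m \<le> N \<Longrightarrow> sample_mean (\<lambda>l\<in>{1..N}. x l) m = sample_mean x m"
  unfolding sample_mean_def by (intro arg_cong[where f = "\<lambda>s. s / m"] sum.cong) auto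

lemma sample_mean_transpose:
  assumes "i \<in> {1..m}"
  shows "sample_mean (\<lambda>l. x (Transposition.transpose 1 i l)) m = sample_mean x m"
  unfolding sample_mean_def
  using sum.reindex_bij_betw[OF bij_betw_transpose_iff[of 1 "{1..m}" i], of x] assms by simp

lemma measurable_PiM_coordinate:
  "(\<lambda>x. x l) \<in> borel_measurable (PiM I (\<lambda>_. borel :: real measure))"
proof (cases "l \<in> I")
  case False
  then have "(\<lambda>x. x l) \<in> borel_measurable (PiM I (\<lambda>_. borel :: real measure)) \<longleftrightarrow>
      (\<lambda>x. undefined :: real) \<in> borel_measurable (PiM I (\<lambda>_. borel :: real measure))"
    by (intro measurable_cong) (auto simp: space_PiM)
  then show ?thesis by simp
qed (rule measurable_component_singleton)

lemma measurable_sample_mean [measurable]: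
  "(\<lambda>x. sample_mean x m) \<in> borel_measurable (PiM I (\<lambda>_. borel :: real measure))"
  unfolding sample_mean_def using measurable_PiM_coordinate by measurable

lemma of_bool_ex_eq_sum_last:
  fixes P :: "nat \<Rightarrow> bool"
  shows "of_bool (\<exists>m\<in>{n..N}. P m) = (\<Sum>m=n..N. of_bool (P m \<and> (\<forall>j\<in>{m<..N}. \<not> P j)) :: real)"
proof (cases "\<exists>m\<in>{n..N}. P m")
  case True
  define m0 where "m0 = Max {m\<in>{n..N}. P m}"
  have fin: "finite {m\<in>{n..N}. P m}" and ne: "{m\<in>{n..N}. P m} \<noteq> {}" using True by auto
  have m0: "m0 \<in> {n..N}" "P m0"
    using Max_in[OF fin ne] unfolding m0_def by auto
  have above: "j \<le> m0" if "j \<in> {n..N}" "P j" for j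
    unfolding m0_def by (rule Max_ge[OF fin]) (use that in simp)
  have "P m \<and> (\<forall>j\<in>{m<..N}. \<not> P j) \<longleftrightarrow> m = m0" if "m \<in> {n..N}" for m
  proof
    assume "P m \<and> (\<forall>j\<in>{m<..N}. \<not> P j)"
    then show "m = m0"
      using above[OF that] m0 by (meson atLeastAtMost_iff greaterThanAtMost_iff le_neq_implies_less)
  next
    assume "m = m0"
    moreover have "\<not> P j" if "j \<in> {m0<..N}" for j
      using above[of j] m0 that by fastforce
    ultimately show "P m \<and> (\<forall>j\<in>{m<..N}. \<not> P j)" using m0 by blast
  qed
  then have "(\<Sum>m=n..N. of_bool (P m \<and> (\<forall>j\<in>{m<..N}. \<not> P j)) :: real) =
      (\<Sum>m=n..N. if m = m0 then 1 else 0)"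
    by (intro sum.cong) auto
  then show ?thesis using True m0 by simp
qed auto

definition last_exceedance :: "real \<Rightarrow> nat \<Rightarrow> nat \<Rightarrow> (nat \<Rightarrow> real) \<Rightarrow> bool" where
  "last_exceedance \<epsilon> N m x \<longleftrightarrow>
    \<epsilon> \<le> \<bar>sample_mean x m\<bar> \<and> (\<forall>j\<in>{m<..N}. \<bar>sample_mean x j\<bar> < \<epsilon>)"

lemma measurable_last_exceedance [measurable]:
  "Measurable.pred (PiM I (\<lambda>_. borel)) (last_exceedance \<epsilon> N m)"
  unfolding last_exceedance_def by measurable

lemma last_exceedance_transpose:
  assumes "i \<in> {1..m}" and "m \<le> N"
  shows "last_exceedance \<epsilon> N m (\<lambda>l\<in>{1..N}. x (Transposition.transpose 1 i l)) =
    last_exceedance \<epsilon> N m (\<lambda>l\<in>{1..N}. x l)"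
proof -
  have "sample_mean (\<lambda>l\<in>{1..N}. x (Transposition.transpose 1 i l)) j = sample_mean (\<lambda>l\<in>{1..N}. x l) j"
    if "j \<in> {m..N}" for j
    using that assms sample_mean_transpose[of i j x]
      sample_mean_restrict[of j N "\<lambda>l. x (Transposition.transpose 1 i l)"] sample_mean_restrict[of j N x]
    by simp
  then show ?thesis
    using assms(2) unfolding last_exceedance_def by auto
qed

lemma integrable_mult_bounded:
  fixes f g :: "'a \<Rightarrow> real"
  assumes "integrable M f" and "g \<in> borel_measurable M" and "\<And>x. \<bar>g x\<bar> \<le> 1"
  shows "integrable M (\<lambda>x. f x * g x)"
proof (rule Bochner_Integration.integrable_bound[OF assms(1)])
  show "(\<lambda>x. f x * g x) \<in> borel_measurable M"
    using assms(1,2) by measurable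
  show "AE x in M. norm (f x * g x) \<le> norm (f x)"
    using assms(3) by (auto simp: abs_mult intro!: mult_left_le)
qed

locale iid_seq = prob_space M for M :: "'a measure" +
  fixes X :: "nat \<Rightarrow> 'a \<Rightarrow> real"
  assumes random_variable_X: "\<And>j. 1 \<le> j \<Longrightarrow> random_variable borel (X j)"
    and indep_X: "indep_vars (\<lambda>_. borel) X {1..}"
    and distr_X: "\<And>j. 1 \<le> j \<Longrightarrow> distr M borel (X j) = distr M borel (X 1)"
begin

lemma integral_comp_X:
  fixes f :: "real \<Rightarrow> real"
  assumes "f \<in> borel_measurable borel" and "1 \<le> j"
  shows "(\<integral>\<omega>. f (X j \<omega>) \<partial>M) = (\<integral>\<omega>. f (X 1 \<omega>) \<partial>M)"
  using integral_distr[OF random_variable_X[OF assms(2)] assms(1)]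
    integral_distr[OF random_variable_X[of 1] assms(1)] distr_X[OF assms(2)] by simp

lemma integrable_comp_X:
  fixes f :: "real \<Rightarrow> real"
  assumes "f \<in> borel_measurable borel" and "integrable M (\<lambda>\<omega>. f (X 1 \<omega>))" and "1 \<le> j"
  shows "integrable M (\<lambda>\<omega>. f (X j \<omega>))"
  using integrable_distr_eq[OF random_variable_X[OF assms(3)] assms(1)]
    integrable_distr_eq[OF random_variable_X[of 1] assms(1)] distr_X[OF assms(3)] assms(2) by simp

lemma integrable_X: "integrable M (X 1) \<Longrightarrow> 1 \<le> j \<Longrightarrow> integrable M (X j)"
  using integrable_comp_X[of "\<lambda>x. x" j] by simp

lemma integrable_sample_mean:
  assumes "integrable M (X 1)"
  shows "integrable M (\<lambda>\<omega>. sample_mean (\<lambda>l. X l \<omega>) k)"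
  unfolding sample_mean_def
  by (intro integrable_divide_zero Bochner_Integration.integrable_sum integrable_X[OF assms]) auto

lemma measurable_restrict_X:
  "(\<lambda>\<omega>. \<lambda>l\<in>{1..N}. X l \<omega>) \<in> measurable M (PiM {1..N} (\<lambda>_. borel))"
  using random_variable_X by (intro measurable_restrict) auto

lemma distr_restrict_X:
  assumes "1 \<le> N"
  shows "distr M (PiM {1..N} (\<lambda>_. borel)) (\<lambda>\<omega>. \<lambda>l\<in>{1..N}. X l \<omega>) =
    PiM {1..N} (\<lambda>_. distr M borel (X 1))"
proof -
  have rv: "random_variable borel (X l)" if "l \<in> {1..N}" for l
    using that random_variable_X by simp
  have ne: "{1..N} \<noteq> {}" using assms by simp
  have "indep_vars (\<lambda>_. borel) X {1..N}"
    by (rule indep_vars_subset[OF indep_X]) auto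
  then have "distr M (PiM {1..N} (\<lambda>_. borel)) (\<lambda>\<omega>. \<lambda>l\<in>{1..N}. X l \<omega>) =
      PiM {1..N} (\<lambda>l. distr M borel (X l))"
    using indep_vars_iff_distr_eq_PiM'[OF ne rv] by simp
  also have "\<dots> = PiM {1..N} (\<lambda>_. distr M borel (X 1))"
  proof (rule PiM_cong)
    fix l assume "l \<in> {1..N}"
    then show "distr M borel (X l) = distr M borel (X 1)" using distr_X[of l] by simp
  qed simp
  finally show ?thesis .
qed

lemma integral_reindex_X:
  fixes h :: "(nat \<Rightarrow> real) \<Rightarrow> real"
  assumes p: "bij_betw p {1..N} {1..N}"
    and h: "h \<in> borel_measurable (PiM {1..N} (\<lambda>_. borel))"
  shows "(\<integral>\<omega>. h (\<lambda>l\<in>{1..N}. X (p l) \<omega>) \<partial>M) = (\<integral>\<omega>. h (\<lambda>l\<in>{1..N}. X l \<omega>) \<partial>M)"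
proof (cases "N = 0")
  case False
  define I where "I = {1..N}"
  define D where "D = distr M borel (X 1)"
  define P where "P = PiM I (\<lambda>_. borel :: real measure)"
  define V where "V \<omega> = (\<lambda>l\<in>I. X l \<omega>)" for \<omega>
  define t where "t x = (\<lambda>l\<in>I. x (p l))" for x :: "nat \<Rightarrow> real"
  have p_into: "\<And>l. l \<in> I \<Longrightarrow> p l \<in> I" and p_inj: "inj_on p I"
    using p unfolding I_def bij_betw_def by auto
  have V_meas: "V \<in> measurable M P"
    unfolding V_def P_def I_def by (rule measurable_restrict_X)
  have distr_V: "distr M P V = PiM I (\<lambda>_. D)"
    unfolding P_def V_def I_def D_def using False by (intro distr_restrict_X) simp
  have sets_eq: "sets (PiM I (\<lambda>_. D)) = sets P"
    unfolding P_def D_def by (rule sets_PiM_cong) auto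
  have hP: "h \<in> borel_measurable P"
    using h unfolding P_def I_def .
  have hD: "h \<in> borel_measurable (PiM I (\<lambda>_. D))"
    by (subst measurable_cong_sets[OF sets_eq refl]) (rule hP)
  have t: "t \<in> measurable (PiM I (\<lambda>_. D)) (PiM I (\<lambda>_. D))"
    unfolding t_def by (intro measurable_restrict measurable_component_singleton p_into)
  have htP: "(\<lambda>x. h (t x)) \<in> borel_measurable P"
    using measurable_comp[OF t hD] by (subst measurable_cong_sets[OF sets_eq[symmetric] refl]) (simp add: comp_def)
  have "prob_space D"
    unfolding D_def using random_variable_X[of 1] by (intro prob_space_distr) simp
  then have distr_t: "distr (PiM I (\<lambda>_. D)) (PiM I (\<lambda>_. D)) t = PiM I (\<lambda>_. D)"
    using distr_PiM_reindex[of I "\<lambda>_. D" p I] p_into p_inj unfolding t_def by blast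
  have tV: "(\<lambda>l\<in>{1..N}. X (p l) \<omega>) = t (V \<omega>)" and V: "(\<lambda>l\<in>{1..N}. X l \<omega>) = V \<omega>" for \<omega>
    unfolding t_def V_def I_def using p_into by (auto simp: fun_eq_iff I_def)
  have "(\<integral>\<omega>. h (t (V \<omega>)) \<partial>M) = integral\<^sup>L (distr M P V) (\<lambda>x. h (t x))"
    by (rule integral_distr[symmetric, OF V_meas htP])
  also have "\<dots> = integral\<^sup>L (distr (PiM I (\<lambda>_. D)) (PiM I (\<lambda>_. D)) t) h"
    unfolding distr_V by (rule integral_distr[symmetric, OF t hD])
  also have "\<dots> = integral\<^sup>L (distr M P V) h"
    unfolding distr_t distr_V ..
  also have "\<dots> = (\<integral>\<omega>. h (V \<omega>) \<partial>M)"
    by (rule integral_distr[OF V_meas hP])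
  finally show ?thesis by (simp only: tV V)
qed (simp add: restrict_def)

lemma integral_X_mult_symmetric:
  fixes g :: "(nat \<Rightarrow> real) \<Rightarrow> real"
  assumes g: "g \<in> borel_measurable (PiM {1..N} (\<lambda>_. borel))" and i: "i \<in> {1..N}"
    and sym: "\<And>x. g (\<lambda>l\<in>{1..N}. x (Transposition.transpose 1 i l)) = g (\<lambda>l\<in>{1..N}. x l)"
  shows "(\<integral>\<omega>. X i \<omega> * g (\<lambda>l\<in>{1..N}. X l \<omega>) \<partial>M) = (\<integral>\<omega>. X 1 \<omega> * g (\<lambda>l\<in>{1..N}. X l \<omega>) \<partial>M)"
proof -
  have "bij_betw (Transposition.transpose 1 i) {1..N} {1..N}"
    using i by (intro bij_betw_transpose_iff) auto
  moreover have "(\<lambda>x. x i * g x) \<in> borel_measurable (PiM {1..N} (\<lambda>_. borel))"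
    using g measurable_PiM_coordinate by measurable
  ultimately have "(\<integral>\<omega>. X (Transposition.transpose 1 i i) \<omega> * g (\<lambda>l\<in>{1..N}. X (Transposition.transpose 1 i l) \<omega>) \<partial>M)
      = (\<integral>\<omega>. X i \<omega> * g (\<lambda>l\<in>{1..N}. X l \<omega>) \<partial>M)"
    using integral_reindex_X[of "Transposition.transpose 1 i" N "\<lambda>x. x i * g x"] i by simp
  then show ?thesis using sym[of "\<lambda>l. X l _"] by simp
qed

lemma measurable_sample_mean_X [measurable]:
  "(\<lambda>\<omega>. sample_mean (\<lambda>l. X l \<omega>) m) \<in> borel_measurable M"
proof -
  have "(\<lambda>\<omega>. sample_mean (\<lambda>l\<in>{1..m}. X l \<omega>) m) \<in> borel_measurable M"
    using measurable_comp[OF measurable_restrict_X[of m] measurable_sample_mean[of m]]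
    by (simp add: comp_def)
  then show ?thesis by (simp only: sample_mean_restrict[OF order_refl])
qed

lemma integrable_mult_last_exceedance:
  fixes f :: "'a \<Rightarrow> real"
  assumes "integrable M f"
  shows "integrable M (\<lambda>\<omega>. f \<omega> * of_bool (last_exceedance \<epsilon> N m (\<lambda>l\<in>{1..N}. X l \<omega>)))"
proof -
  have L: "(\<lambda>x. of_bool (last_exceedance \<epsilon> N m x) :: real) \<in> borel_measurable (PiM {1..N} (\<lambda>_. borel))"
    by measurable
  show ?thesis
    using integrable_mult_bounded[OF assms measurable_comp[OF measurable_restrict_X L]]
    by (simp add: comp_def)
qed

text \<open>For \<open>g\<close> symmetric in the first \<open>m\<close> coordinates all \<open>X i\<close>, \<open>i \<le> m\<close>, have the same
  correlation with \<open>g\<close>; so the running means form a reverse martingale.\<close>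
lemma integral_sample_mean_mult_symmetric:
  fixes g :: "(nat \<Rightarrow> real) \<Rightarrow> real"
  assumes int: "integrable M (X 1)" and g: "g \<in> borel_measurable (PiM {1..N} (\<lambda>_. borel))"
    and g_bound: "\<And>x. \<bar>g x\<bar> \<le> 1" and k: "k \<in> {1..m}" and "m \<le> N"
    and sym: "\<And>i x. i \<in> {1..m} \<Longrightarrow>
      g (\<lambda>l\<in>{1..N}. x (Transposition.transpose 1 i l)) = g (\<lambda>l\<in>{1..N}. x l)"
  shows "(\<integral>\<omega>. sample_mean (\<lambda>l. X l \<omega>) k * g (\<lambda>l\<in>{1..N}. X l \<omega>) \<partial>M) =
    (\<integral>\<omega>. X 1 \<omega> * g (\<lambda>l\<in>{1..N}. X l \<omega>) \<partial>M)"
proof -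
  let ?g = "\<lambda>\<omega>. g (\<lambda>l\<in>{1..N}. X l \<omega>)"
  have "?g \<in> borel_measurable M"
    using measurable_comp[OF measurable_restrict_X g] by (simp add: comp_def)
  then have int_i: "integrable M (\<lambda>\<omega>. X i \<omega> * ?g \<omega>)" if "1 \<le> i" for i
    using integrable_mult_bounded[OF integrable_X[OF int that]] g_bound by blast
  have "(\<integral>\<omega>. sample_mean (\<lambda>l. X l \<omega>) k * ?g \<omega> \<partial>M) = (\<integral>\<omega>. (\<Sum>i=1..k. X i \<omega> * ?g \<omega>) / k \<partial>M)"
    unfolding sample_mean_def by (simp add: sum_distrib_right)
  also have "\<dots> = (\<Sum>i=1..k. \<integral>\<omega>. X i \<omega> * ?g \<omega> \<partial>M) / k"
    using int_i by (simp add: Bochner_Integration.integral_sum)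
  also have "\<dots> = (\<Sum>i=1..k. \<integral>\<omega>. X 1 \<omega> * ?g \<omega> \<partial>M) / k"
    using k \<open>m \<le> N\<close> by (intro arg_cong[where f = "\<lambda>s. s / k"] sum.cong refl integral_X_mult_symmetric g sym) auto
  also have "\<dots> = (\<integral>\<omega>. X 1 \<omega> * ?g \<omega> \<partial>M)"
    using k by simp
  finally show ?thesis .
qed

text \<open>Doob's argument: where \<open>m\<close> is the last exceedance, \<open>\<epsilon>\<close> is at most the mean of order \<open>m\<close>
  times its sign, and this weight is symmetric in the first \<open>m\<close> coordinates, so the mean of
  order \<open>m\<close> may be replaced by the mean of order \<open>n\<close>.\<close>
lemma last_exceedance_bound:
  assumes int: "integrable M (X 1)" and n: "n \<in> {1..m}" and "m \<le> N"
  shows "(\<integral>\<omega>. \<epsilon> * of_bool (last_exceedance \<epsilon> N m (\<lambda>l\<in>{1..N}. X l \<omega>)) \<partial>M) \<le>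
    (\<integral>\<omega>. \<bar>sample_mean (\<lambda>l. X l \<omega>) n\<bar> * of_bool (last_exceedance \<epsilon> N m (\<lambda>l\<in>{1..N}. X l \<omega>)) \<partial>M)"
proof -
  define s where "s x = sgn (sample_mean x m) * of_bool (last_exceedance \<epsilon> N m x)" for x
  let ?V = "\<lambda>\<omega>. \<lambda>l\<in>{1..N}. X l \<omega>"
  let ?L = "\<lambda>\<omega>. of_bool (last_exceedance \<epsilon> N m (?V \<omega>)) :: real"
  have s_meas: "s \<in> borel_measurable (PiM {1..N} (\<lambda>_. borel))"
    unfolding s_def by measurable
  have s_bound: "\<bar>s x\<bar> \<le> 1" for x
    unfolding s_def by (simp add: abs_mult abs_sgn_eq)
  have mean_V: "sample_mean (?V \<omega>) k = sample_mean (\<lambda>l. X l \<omega>) k" if "k \<le> N" for k \<omega>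
    using sample_mean_restrict[OF that] .
  have s_sym: "s (\<lambda>l\<in>{1..N}. x (Transposition.transpose 1 i l)) = s (\<lambda>l\<in>{1..N}. x l)"
    if "i \<in> {1..m}" for i x
    using last_exceedance_transpose[OF that \<open>m \<le> N\<close>] sample_mean_transpose[OF that, of x]
      sample_mean_restrict[OF \<open>m \<le> N\<close>, of "\<lambda>l. x (Transposition.transpose 1 i l)"]
      sample_mean_restrict[OF \<open>m \<le> N\<close>, of x]
    unfolding s_def by simp
  have sV: "?L \<omega> * \<bar>sample_mean (\<lambda>l. X l \<omega>) m\<bar> = sample_mean (\<lambda>l. X l \<omega>) m * s (?V \<omega>)" for \<omega>
    unfolding s_def using mean_V[OF \<open>m \<le> N\<close>] by (simp add: abs_sgn)
  have s_int: "integrable M (\<lambda>\<omega>. f \<omega> * s (?V \<omega>))" if "integrable M f" for f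
    using integrable_mult_bounded[OF that measurable_comp[OF measurable_restrict_X s_meas]] s_bound
    by (simp add: comp_def)
  note L_int = integrable_mult_last_exceedance[of _ \<epsilon> N m]
  have "(\<integral>\<omega>. \<epsilon> * ?L \<omega> \<partial>M) \<le> (\<integral>\<omega>. sample_mean (\<lambda>l. X l \<omega>) m * s (?V \<omega>) \<partial>M)"
  proof (rule integral_mono)
    show "\<epsilon> * ?L \<omega> \<le> sample_mean (\<lambda>l. X l \<omega>) m * s (?V \<omega>)" for \<omega>
      unfolding sV[symmetric] using mean_V[OF \<open>m \<le> N\<close>] by (simp add: last_exceedance_def)
  qed (use L_int[of "\<lambda>_. \<epsilon>"] s_int[OF integrable_sample_mean[OF int]] in simp_all)
  also have "\<dots> = (\<integral>\<omega>. X 1 \<omega> * s (?V \<omega>) \<partial>M)"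
    using n by (intro integral_sample_mean_mult_symmetric[OF int s_meas s_bound _ \<open>m \<le> N\<close> s_sym]) auto
  also have "\<dots> = (\<integral>\<omega>. sample_mean (\<lambda>l. X l \<omega>) n * s (?V \<omega>) \<partial>M)"
    by (rule integral_sample_mean_mult_symmetric[OF int s_meas s_bound n \<open>m \<le> N\<close> s_sym, symmetric])
  also have "\<dots> \<le> (\<integral>\<omega>. \<bar>sample_mean (\<lambda>l. X l \<omega>) n\<bar> * ?L \<omega> \<partial>M)"
  proof (rule integral_mono)
    show "sample_mean (\<lambda>l. X l \<omega>) n * s (?V \<omega>) \<le> \<bar>sample_mean (\<lambda>l. X l \<omega>) n\<bar> * ?L \<omega>" for \<omega>
      unfolding s_def by (auto simp: sgn_if)
  qed (use L_int[of "\<lambda>\<omega>. \<bar>sample_mean (\<lambda>l. X l \<omega>) n\<bar>"] s_int[OF integrable_sample_mean[OF int]]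
      integrable_sample_mean[OF int] in simp_all)
  finally show ?thesis .
qed

lemma maximal_inequality_finite:
  assumes int: "integrable M (X 1)" and n: "1 \<le> n" "n \<le> N"
  shows "\<epsilon> * prob {\<omega> \<in> space M. \<exists>m\<in>{n..N}. \<epsilon> \<le> \<bar>sample_mean (\<lambda>l. X l \<omega>) m\<bar>}
    \<le> (\<integral>\<omega>. \<bar>sample_mean (\<lambda>l. X l \<omega>) n\<bar> \<partial>M)"
proof -
  let ?V = "\<lambda>\<omega>. \<lambda>l\<in>{1..N}. X l \<omega>"
  let ?L = "\<lambda>m \<omega>. of_bool (last_exceedance \<epsilon> N m (?V \<omega>)) :: real"
  let ?a = "\<lambda>\<omega>. \<bar>sample_mean (\<lambda>l. X l \<omega>) n\<bar>"
  define S where "S = {\<omega> \<in> space M. \<exists>m\<in>{n..N}. \<epsilon> \<le> \<bar>sample_mean (\<lambda>l. X l \<omega>) m\<bar>}"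
  have S_sets: "S \<in> sets M"
  proof -
    have "Measurable.pred M (\<lambda>\<omega>. \<exists>m\<in>{n..N}. \<epsilon> \<le> \<bar>sample_mean (\<lambda>l. X l \<omega>) m\<bar>)"
      by (rule pred_intros_finite) auto
    then show ?thesis unfolding S_def by measurable
  qed
  have decomp: "indicator S \<omega> = (\<Sum>m=n..N. ?L m \<omega>)" if "\<omega> \<in> space M" for \<omega>
  proof -
    have "sample_mean (?V \<omega>) m = sample_mean (\<lambda>l. X l \<omega>) m" if "m \<in> {n..N}" for m
      using that sample_mean_restrict[of m N "\<lambda>l. X l \<omega>"] by simp
    then have "(\<exists>m\<in>{n..N}. \<epsilon> \<le> \<bar>sample_mean (\<lambda>l. X l \<omega>) m\<bar>) \<longleftrightarrow>
        (\<exists>m\<in>{n..N}. \<epsilon> \<le> \<bar>sample_mean (?V \<omega>) m\<bar>)"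
      by auto
    then show ?thesis
      using that of_bool_ex_eq_sum_last[of n N "\<lambda>m. \<epsilon> \<le> \<bar>sample_mean (?V \<omega>) m\<bar>"]
      unfolding S_def last_exceedance_def not_le indicator_def by simp
  qed
  have int_L: "integrable M (\<lambda>\<omega>. f \<omega> * ?L m \<omega>)" if "integrable M f" for f m
    by (rule integrable_mult_last_exceedance[OF that])
  have int_a: "integrable M ?a"
    using integrable_sample_mean[OF int] by simp
  have "\<epsilon> * prob S = (\<integral>\<omega>. \<epsilon> * indicator S \<omega> \<partial>M)"
    using S_sets by simp
  also have "\<dots> = (\<integral>\<omega>. (\<Sum>m=n..N. \<epsilon> * ?L m \<omega>) \<partial>M)"
    by (rule Bochner_Integration.integral_cong) (simp_all only: decomp sum_distrib_left)
  also have "\<dots> = (\<Sum>m=n..N. \<integral>\<omega>. \<epsilon> * ?L m \<omega> \<partial>M)"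
    using int_L[of "\<lambda>_. \<epsilon>"] by (intro Bochner_Integration.integral_sum) simp
  also have "\<dots> \<le> (\<Sum>m=n..N. \<integral>\<omega>. ?a \<omega> * ?L m \<omega> \<partial>M)"
    using n by (intro sum_mono last_exceedance_bound[OF int]) auto
  also have "\<dots> = (\<integral>\<omega>. (\<Sum>m=n..N. ?a \<omega> * ?L m \<omega>) \<partial>M)"
    using int_L[OF int_a] by (intro Bochner_Integration.integral_sum[symmetric])
  also have "\<dots> = (\<integral>\<omega>. ?a \<omega> * indicator S \<omega> \<partial>M)"
    by (rule Bochner_Integration.integral_cong) (simp_all only: decomp sum_distrib_left)
  also have "\<dots> \<le> (\<integral>\<omega>. ?a \<omega> \<partial>M)"
    using int_a by (intro integral_mono integrable_real_mult_indicator S_sets) (auto simp: indicator_def)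
  finally show ?thesis unfolding S_def .
qed

lemma maximal_inequality:
  assumes int: "integrable M (X 1)" and n: "1 \<le> n" and eps: "\<epsilon> > 0"
  shows "\<epsilon> * prob {\<omega> \<in> space M. \<exists>m\<ge>n. \<epsilon> < \<bar>sample_mean (\<lambda>l. X l \<omega>) m\<bar>}
    \<le> (\<integral>\<omega>. \<bar>sample_mean (\<lambda>l. X l \<omega>) n\<bar> \<partial>M)"
proof -
  define E where "E = (\<integral>\<omega>. \<bar>sample_mean (\<lambda>l. X l \<omega>) n\<bar> \<partial>M)"
  define A where "A N = {\<omega> \<in> space M. \<exists>m\<in>{n..N}. \<epsilon> \<le> \<bar>sample_mean (\<lambda>l. X l \<omega>) m\<bar>}" for N
  have A_sets: "A N \<in> sets M" for N
  proof -
    have "Measurable.pred M (\<lambda>\<omega>. \<exists>m\<in>{n..N}. \<epsilon> \<le> \<bar>sample_mean (\<lambda>l. X l \<omega>) m\<bar>)"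
      by (rule pred_intros_finite) auto
    then show ?thesis unfolding A_def by measurable
  qed
  have "prob (A N) \<le> E / \<epsilon>" for N
  proof (cases "n \<le> N")
    case True
    then show ?thesis
      using maximal_inequality_finite[OF int n True, of \<epsilon>] eps unfolding A_def E_def
      by (simp add: field_simps)
  next
    case False
    then have "A N = {}" unfolding A_def by auto
    then show ?thesis unfolding E_def using eps by simp
  qed
  moreover have "(\<lambda>N. prob (A N)) \<longlonglongrightarrow> prob (\<Union>N. A N)"
    using A_sets by (intro finite_Lim_measure_incseq) (auto simp: incseq_def A_def)
  ultimately have "prob (\<Union>N. A N) \<le> E / \<epsilon>"
    by (intro LIMSEQ_le_const2) auto
  moreover have "{\<omega> \<in> space M. \<exists>m\<ge>n. \<epsilon> < \<bar>sample_mean (\<lambda>l. X l \<omega>) m\<bar>} \<subseteq> (\<Union>N. A N)"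
    unfolding A_def by force
  then have "prob {\<omega> \<in> space M. \<exists>m\<ge>n. \<epsilon> < \<bar>sample_mean (\<lambda>l. X l \<omega>) m\<bar>} \<le> prob (\<Union>N. A N)"
    using A_sets by (intro finite_measure_mono) auto
  ultimately have "prob {\<omega> \<in> space M. \<exists>m\<ge>n. \<epsilon> < \<bar>sample_mean (\<lambda>l. X l \<omega>) m\<bar>} \<le> E / \<epsilon>"
    by linarith
  then show ?thesis
    using eps unfolding E_def by (simp add: field_simps)
qed

end

section \<open>The weak law of large numbers in \<open>L\<^sup>1\<close>\<close>

lemma abs_le_am_gm: "a > 0 \<Longrightarrow> \<bar>x :: real\<bar> \<le> (x\<^sup>2 / a + a) / 2"
proof -
  assume "a > 0"
  have "0 \<le> (\<bar>x\<bar> - a)\<^sup>2" by simp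
  then have "2 * a * \<bar>x\<bar> \<le> x\<^sup>2 + a\<^sup>2" by (simp add: power2_eq_square algebra_simps)
  then show ?thesis using \<open>a > 0\<close> by (simp add: field_simps power2_eq_square)
qed

context prob_space
begin

lemma integral_sum_square_indep_le:
  fixes U :: "'i \<Rightarrow> 'a \<Rightarrow> real"
  assumes "finite L" and indep: "indep_vars (\<lambda>_. borel) U L"
    and meas: "\<And>l. l \<in> L \<Longrightarrow> U l \<in> borel_measurable M"
    and bound: "\<And>l \<omega>. l \<in> L \<Longrightarrow> \<bar>U l \<omega>\<bar> \<le> b"
    and mean: "\<And>l. l \<in> L \<Longrightarrow> expectation (U l) = 0"
  shows "(\<integral>\<omega>. (\<Sum>l\<in>L. U l \<omega>)\<^sup>2 \<partial>M) \<le> b\<^sup>2 * card L"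
proof -
  have int_U: "integrable M (U l)" if "l \<in> L" for l
    using bound[OF that] meas[OF that] by (intro integrable_const_bound[where B = b]) auto
  have int: "integrable M (\<lambda>\<omega>. U i \<omega> * U k \<omega>)" if "i \<in> L" "k \<in> L" for i k
  proof (rule integrable_const_bound[where B = "b\<^sup>2"])
    have "\<bar>U i \<omega>\<bar> * \<bar>U k \<omega>\<bar> \<le> b * b" for \<omega>
      using bound[OF that(1), of \<omega>] bound[OF that(2), of \<omega>]
      by (intro mult_mono) (auto intro: order_trans[OF abs_ge_zero])
    then show "AE \<omega> in M. norm (U i \<omega> * U k \<omega>) \<le> b\<^sup>2"
      by (simp add: abs_mult power2_eq_square)
  qed (use meas that in measurable)
  have cross: "expectation (\<lambda>\<omega>. U i \<omega> * U k \<omega>) = (if i = k then expectation (\<lambda>\<omega>. (U i \<omega>)\<^sup>2) else 0)"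
    if "i \<in> L" "k \<in> L" for i k
  proof (cases "i = k")
    case False
    have "expectation (\<lambda>\<omega>. \<Prod>j\<in>{i, k}. U j \<omega>) = (\<Prod>j\<in>{i, k}. expectation (U j))"
      using that indep_vars_subset[OF indep, of "{i, k}"] meas
      by (intro indep_vars_lebesgue_integral) (auto intro: int_U)
    then show ?thesis using False that mean by simp
  qed (simp add: power2_eq_square)
  have "(\<integral>\<omega>. (\<Sum>l\<in>L. U l \<omega>)\<^sup>2 \<partial>M) = (\<Sum>i\<in>L. \<Sum>k\<in>L. expectation (\<lambda>\<omega>. U i \<omega> * U k \<omega>))"
    using int by (simp add: power2_eq_square sum_product Bochner_Integration.integral_sum
      Bochner_Integration.integrable_sum)
  also have "\<dots> = (\<Sum>i\<in>L. expectation (\<lambda>\<omega>. (U i \<omega>)\<^sup>2))"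
    using \<open>finite L\<close> by (simp add: cross if_distrib sum.delta cong: sum.cong)
  also have "\<dots> \<le> (\<Sum>i\<in>L. b\<^sup>2)"
  proof (rule sum_mono)
    fix i assume "i \<in> L"
    moreover have "(U i \<omega>)\<^sup>2 \<le> b\<^sup>2" for \<omega>
      using power_mono[OF bound[OF \<open>i \<in> L\<close>, of \<omega>] abs_ge_zero, of 2] by simp
    ultimately have "expectation (\<lambda>\<omega>. (U i \<omega>)\<^sup>2) \<le> expectation (\<lambda>_. b\<^sup>2)"
      using int[of i i] by (intro integral_mono) (auto simp: power2_eq_square)
    then show "expectation (\<lambda>\<omega>. (U i \<omega>)\<^sup>2) \<le> b\<^sup>2" by (simp add: prob_space)
  qed
  finally show ?thesis by (simp add: mult.commute)
qed

lemma integral_abs_sum_indep_le: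
  fixes U :: "'i \<Rightarrow> 'a \<Rightarrow> real"
  assumes "finite L" and indep: "indep_vars (\<lambda>_. borel) U L"
    and meas: "\<And>l. l \<in> L \<Longrightarrow> U l \<in> borel_measurable M"
    and bound: "\<And>l \<omega>. l \<in> L \<Longrightarrow> \<bar>U l \<omega>\<bar> \<le> b"
    and mean: "\<And>l. l \<in> L \<Longrightarrow> expectation (U l) = 0"
    and "b > 0"
  shows "(\<integral>\<omega>. \<bar>\<Sum>l\<in>L. U l \<omega>\<bar> \<partial>M) \<le> b * sqrt (card L)"
proof (cases "L = {}")
  case False
  define a where "a = b * sqrt (card L)"
  have a_pos: "a > 0"
    using \<open>b > 0\<close> False \<open>finite L\<close> by (simp add: a_def card_gt_0_iff)
  have sum_meas: "(\<lambda>\<omega>. \<Sum>l\<in>L. U l \<omega>) \<in> borel_measurable M"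
    using meas by (rule borel_measurable_sum)
  have sum_bound: "\<bar>\<Sum>l\<in>L. U l \<omega>\<bar> \<le> b * card L" for \<omega>
  proof -
    have "(\<Sum>l\<in>L. \<bar>U l \<omega>\<bar>) \<le> card L * b" by (rule sum_bounded_above) (rule bound)
    then show ?thesis by (intro order_trans[OF sum_abs]) (simp add: mult.commute)
  qed
  then have "(\<Sum>l\<in>L. U l \<omega>)\<^sup>2 \<le> (b * card L)\<^sup>2" for \<omega>
    using abs_le_square_iff by (metis abs_of_nonneg order_trans[OF abs_ge_zero])
  then have sq_int: "integrable M (\<lambda>\<omega>. (\<Sum>l\<in>L. U l \<omega>)\<^sup>2)"
    using sum_meas by (intro integrable_const_bound[where B = "(b * card L)\<^sup>2"]) auto
  have abs_int: "integrable M (\<lambda>\<omega>. \<bar>\<Sum>l\<in>L. U l \<omega>\<bar>)"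
    using sum_meas sum_bound by (intro integrable_const_bound[where B = "b * card L"]) auto
  have "(\<integral>\<omega>. \<bar>\<Sum>l\<in>L. U l \<omega>\<bar> \<partial>M) \<le> (\<integral>\<omega>. ((\<Sum>l\<in>L. U l \<omega>)\<^sup>2 / a + a) / 2 \<partial>M)"
    using abs_int sq_int abs_le_am_gm[OF a_pos] by (intro integral_mono) auto
  also have "\<dots> = ((\<integral>\<omega>. (\<Sum>l\<in>L. U l \<omega>)\<^sup>2 \<partial>M) / a + a) / 2"
    using sq_int by (simp add: prob_space)
  also have "\<dots> \<le> (b\<^sup>2 * card L / a + a) / 2"
    using integral_sum_square_indep_le[OF assms(1-5)] a_pos by (simp add: divide_right_mono)
  also have "\<dots> = a"
  proof -
    have "a * a = b\<^sup>2 * card L"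
      unfolding a_def by (simp add: power2_eq_square algebra_simps real_sqrt_mult_self)
    then show ?thesis using a_pos by (simp add: field_simps)
  qed
  finally show ?thesis unfolding a_def .
qed simp

end

definition truncate :: "real \<Rightarrow> real \<Rightarrow> real" where
  "truncate c y = (if \<bar>y\<bar> \<le> c then y else 0)"

lemma measurable_truncate [measurable]: "truncate c \<in> borel_measurable borel"
  unfolding truncate_def by measurable

lemma abs_truncate_le: "\<bar>truncate c y\<bar> \<le> \<bar>y\<bar>" and abs_truncate_le_level: "c \<ge> 0 \<Longrightarrow> \<bar>truncate c y\<bar> \<le> c"
  and abs_truncation_error_le: "\<bar>y - truncate c y\<bar> \<le> \<bar>y\<bar>"
  unfolding truncate_def by auto

context iid_seq
begin

lemma integrable_truncate_X:
  assumes "integrable M (X 1)" and "1 \<le> j"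
  shows "integrable M (\<lambda>\<omega>. truncate c (X j \<omega>))"
  using random_variable_X[OF assms(2)] abs_truncate_le
  by (intro Bochner_Integration.integrable_bound[OF integrable_X[OF assms]]) auto

lemma integral_abs_sum_truncate_centered_le:
  assumes int: "integrable M (X 1)" and c: "c > 0"
  shows "(\<integral>\<omega>. \<bar>\<Sum>l\<in>{1..n}. truncate c (X l \<omega>) - expectation (\<lambda>\<omega>. truncate c (X 1 \<omega>))\<bar> \<partial>M)
    \<le> 2 * c * sqrt n"
proof -
  define \<mu> where "\<mu> = expectation (\<lambda>\<omega>. truncate c (X 1 \<omega>))"
  have "\<bar>\<mu>\<bar> \<le> (\<integral>\<omega>. \<bar>truncate c (X 1 \<omega>)\<bar> \<partial>M)"
    unfolding \<mu>_def by (rule integral_abs_bound)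
  also have "\<dots> \<le> (\<integral>\<omega>. c \<partial>M)"
    using integrable_truncate_X[OF int, of 1] abs_truncate_le_level c
    by (intro integral_mono) auto
  finally have "\<bar>\<mu>\<bar> \<le> c" by (simp add: prob_space)
  then have bound: "\<bar>truncate c (X l \<omega>) - \<mu>\<bar> \<le> 2 * c" for l \<omega>
    using abs_truncate_le_level[of c "X l \<omega>"] c by linarith
  have "indep_vars (\<lambda>_. borel) (\<lambda>l \<omega>. truncate c (X l \<omega>) - \<mu>) {1..}"
    by (rule indep_vars_compose2[OF indep_X, where Y = "\<lambda>_ y. truncate c y - \<mu>"]) measurable
  then have "indep_vars (\<lambda>_. borel) (\<lambda>l \<omega>. truncate c (X l \<omega>) - \<mu>) {1..n}"
    by (rule indep_vars_subset) auto
  moreover have "expectation (\<lambda>\<omega>. truncate c (X l \<omega>) - \<mu>) = 0" if "l \<in> {1..n}" for l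
    using that integrable_truncate_X[OF int, of l] integral_comp_X[OF measurable_truncate, of l]
    by (simp add: \<mu>_def prob_space)
  moreover have "(\<lambda>\<omega>. truncate c (X l \<omega>) - \<mu>) \<in> borel_measurable M" if "l \<in> {1..n}" for l
  proof -
    have [measurable]: "X l \<in> borel_measurable M" using random_variable_X that by simp
    show ?thesis by measurable
  qed
  ultimately have "(\<integral>\<omega>. \<bar>\<Sum>l\<in>{1..n}. truncate c (X l \<omega>) - \<mu>\<bar> \<partial>M) \<le> 2 * c * sqrt (card {1..n})"
    using bound c by (intro integral_abs_sum_indep_le) auto
  then show ?thesis unfolding \<mu>_def by simp
qed

text \<open>Truncation at level \<open>c\<close>: the centred truncated part is controlled in \<open>L\<^sup>2\<close> by independence,
  the remainder in \<open>L\<^sup>1\<close>.\<close>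
lemma weak_law_L1_truncation_bound:
  assumes int: "integrable M (X 1)" and mean: "expectation (X 1) = 0" and c: "c > 0" and n: "1 \<le> n"
  shows "(\<integral>\<omega>. \<bar>sample_mean (\<lambda>l. X l \<omega>) n\<bar> \<partial>M)
    \<le> 2 * c / sqrt n + 2 * (\<integral>\<omega>. \<bar>X 1 \<omega> - truncate c (X 1 \<omega>)\<bar> \<partial>M)"
proof -
  define \<mu> where "\<mu> = expectation (\<lambda>\<omega>. truncate c (X 1 \<omega>))"
  define r where "r l \<omega> = X l \<omega> - truncate c (X l \<omega>)" for l \<omega>
  define t where "t = (\<integral>\<omega>. \<bar>r 1 \<omega>\<bar> \<partial>M)"
  define S where "S \<omega> = \<bar>\<Sum>l\<in>{1..n}. truncate c (X l \<omega>) - \<mu>\<bar>" for \<omega>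
  have int_r: "integrable M (r l)" if "1 \<le> l" for l
    unfolding r_def using integrable_X[OF int that] integrable_truncate_X[OF int that] by simp
  have t_eq: "(\<integral>\<omega>. \<bar>r l \<omega>\<bar> \<partial>M) = t" if "1 \<le> l" for l
    unfolding t_def r_def using that by (intro integral_comp_X) auto
  have "\<mu> = - expectation (r 1)"
    using mean integrable_X[OF int, of 1] integrable_truncate_X[OF int, of 1]
    unfolding \<mu>_def r_def by simp
  then have \<mu>_le: "\<bar>\<mu>\<bar> \<le> t"
    unfolding t_def using integral_abs_bound[of M "r 1"] by simp
  have int_S: "integrable M S"
    unfolding S_def using integrable_truncate_X[OF int]
    by (intro integrable_abs Bochner_Integration.integrable_diff Bochner_Integration.integrable_sum) auto
  have int_sum_r: "integrable M (\<lambda>\<omega>. \<Sum>l\<in>{1..n}. \<bar>r l \<omega>\<bar>)"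
    using int_r by (intro Bochner_Integration.integrable_sum integrable_abs) auto
  have pointwise: "\<bar>sample_mean (\<lambda>l. X l \<omega>) n\<bar> \<le> S \<omega> / n + (\<Sum>l\<in>{1..n}. \<bar>r l \<omega>\<bar>) / n + \<bar>\<mu>\<bar>" for \<omega>
  proof -
    have "(\<Sum>l=1..n. X l \<omega>) = (\<Sum>l\<in>{1..n}. truncate c (X l \<omega>) - \<mu>) + (\<Sum>l\<in>{1..n}. r l \<omega>) + n * \<mu>"
      unfolding r_def by (simp add: sum.distrib sum_subtractf)
    moreover have "\<bar>\<Sum>l\<in>{1..n}. r l \<omega>\<bar> \<le> (\<Sum>l\<in>{1..n}. \<bar>r l \<omega>\<bar>)"
      by (rule sum_abs)
    moreover have "\<bar>n * \<mu>\<bar> = n * \<bar>\<mu>\<bar>" by (simp add: abs_mult)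
    ultimately have "\<bar>\<Sum>l=1..n. X l \<omega>\<bar> \<le> S \<omega> + (\<Sum>l\<in>{1..n}. \<bar>r l \<omega>\<bar>) + n * \<bar>\<mu>\<bar>"
      unfolding S_def
      using abs_triangle_ineq[of "(\<Sum>l\<in>{1..n}. truncate c (X l \<omega>) - \<mu>) + (\<Sum>l\<in>{1..n}. r l \<omega>)" "n * \<mu>"]
        abs_triangle_ineq[of "\<Sum>l\<in>{1..n}. truncate c (X l \<omega>) - \<mu>" "\<Sum>l\<in>{1..n}. r l \<omega>"]
      by linarith
    then show ?thesis
      using n unfolding sample_mean_def by (simp add: field_simps abs_divide)
  qed
  have "(\<integral>\<omega>. \<bar>sample_mean (\<lambda>l. X l \<omega>) n\<bar> \<partial>M)
      \<le> (\<integral>\<omega>. S \<omega> / n + (\<Sum>l\<in>{1..n}. \<bar>r l \<omega>\<bar>) / n + \<bar>\<mu>\<bar> \<partial>M)"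
    using pointwise int_S int_sum_r integrable_abs[OF integrable_sample_mean[OF int]]
    by (intro integral_mono) auto
  also have "\<dots> = (\<integral>\<omega>. S \<omega> \<partial>M) / n + n * t / n + \<bar>\<mu>\<bar>"
    using int_S int_sum_r int_r t_eq
    by (simp add: Bochner_Integration.integral_sum integrable_abs prob_space)
  also have "\<dots> \<le> 2 * c * sqrt n / n + t + t"
    using divide_right_mono[OF integral_abs_sum_truncate_centered_le[OF int c, of n], of n] \<mu>_le n
    unfolding S_def \<mu>_def by simp
  also have "2 * c * sqrt n / n = 2 * c / sqrt n"
    using n by (simp add: field_simps real_sqrt_divide real_div_sqrt)
  finally show ?thesis unfolding t_def r_def by simp
qed

lemma weak_law_L1:
  assumes int: "integrable M (X 1)" and mean: "expectation (X 1) = 0"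
  shows "(\<lambda>n. \<integral>\<omega>. \<bar>sample_mean (\<lambda>l. X l \<omega>) n\<bar> \<partial>M) \<longlonglongrightarrow> 0"
proof (rule LIMSEQ_I)
  fix \<epsilon> :: real assume "\<epsilon> > 0"
  define t where "t k = (\<integral>\<omega>. \<bar>X 1 \<omega> - truncate (Suc k) (X 1 \<omega>)\<bar> \<partial>M)" for k
  have X1_meas [measurable]: "X 1 \<in> borel_measurable M"
    using random_variable_X[of 1] by simp
  have "t \<longlonglongrightarrow> (\<integral>\<omega>. 0 \<partial>M)"
    unfolding t_def
  proof (rule integral_dominated_convergence[where w = "\<lambda>\<omega>. \<bar>X 1 \<omega>\<bar>"])
    show "AE \<omega> in M. (\<lambda>k. \<bar>X 1 \<omega> - truncate (Suc k) (X 1 \<omega>)\<bar>) \<longlonglongrightarrow> 0"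
    proof (rule AE_I2, rule tendsto_eventually)
      fix \<omega>
      show "\<forall>\<^sub>F k in sequentially. \<bar>X 1 \<omega> - truncate (Suc k) (X 1 \<omega>)\<bar> = 0"
        unfolding eventually_sequentially truncate_def
        by (rule exI[of _ "nat \<lceil>\<bar>X 1 \<omega>\<bar>\<rceil>"]) (auto simp: nat_le_iff ceiling_le_iff)
    qed
  qed (use int abs_truncation_error_le in auto)
  then have "\<forall>\<^sub>F k in sequentially. t k < \<epsilon> / 4"
    using \<open>\<epsilon> > 0\<close> by (intro order_tendstoD(2)) auto
  then obtain k where tk: "t k < \<epsilon> / 4"
    by (auto simp: eventually_sequentially)
  have "(\<lambda>n. 2 * real (Suc k) / sqrt (real n)) \<longlonglongrightarrow> 0"
    by (intro tendsto_divide_0[OF tendsto_const] filterlim_at_top_imp_at_infinity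
      filterlim_compose[OF sqrt_at_top filterlim_real_sequentially])
  then have "\<forall>\<^sub>F n in sequentially. 2 * real (Suc k) / sqrt (real n) < \<epsilon> / 2"
    using \<open>\<epsilon> > 0\<close> by (intro order_tendstoD(2)) auto
  then obtain N where N: "\<And>n. n \<ge> N \<Longrightarrow> 2 * real (Suc k) / sqrt (real n) < \<epsilon> / 2"
    by (auto simp: eventually_sequentially)
  show "\<exists>N. \<forall>n\<ge>N. norm ((\<integral>\<omega>. \<bar>sample_mean (\<lambda>l. X l \<omega>) n\<bar> \<partial>M) - 0) < \<epsilon>"
  proof (intro exI allI impI)
    fix n assume n: "max N 1 \<le> n"
    have "(\<integral>\<omega>. \<bar>sample_mean (\<lambda>l. X l \<omega>) n\<bar> \<partial>M) \<le> 2 * real (Suc k) / sqrt n + 2 * t k"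
      unfolding t_def by (rule weak_law_L1_truncation_bound[OF int mean]) (use n in auto)
    then have "(\<integral>\<omega>. \<bar>sample_mean (\<lambda>l. X l \<omega>) n\<bar> \<partial>M) < \<epsilon>"
      using N[of n] n tk by linarith
    then show "norm ((\<integral>\<omega>. \<bar>sample_mean (\<lambda>l. X l \<omega>) n\<bar> \<partial>M) - 0) < \<epsilon>"
      by simp
  qed
qed

end

section \<open>Probability of the oracle event\<close>

lemma kdp_finite_and_iff:
  "(kdp \<tau> sv a \<delta> Z \<omega> < \<infinity> \<and> P (the_enat (kdp \<tau> sv a \<delta> Z \<omega>))) \<longleftrightarrow>
    (\<exists>K. (\<forall>m\<ge>1. kdp_m \<tau> sv a \<delta> Z \<omega> m \<le> K) \<and> (\<exists>m\<ge>1. kdp_m \<tau> sv a \<delta> Z \<omega> m = K) \<and> P K)"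
  by (metis enat_ord_simps(4) kdp_eq_enat_iff not_enat_eq the_enat.simps)

lemma sets_oracle_event:
  fixes Z :: "nat \<Rightarrow> 'w \<Rightarrow> real"
  assumes sv_pos: "\<And>j. j \<ge> 1 \<Longrightarrow> sv j > 0"
    and summable: "(\<lambda>j. (ydag sv a j)\<^sup>2) summable_on {1..}"
    and Z_meas: "\<And>j. j \<ge> 1 \<Longrightarrow> Z j \<in> borel_measurable M"
  shows "{\<omega> \<in> space M. kdp \<tau> sv a \<delta> Z \<omega> < \<infinity> \<and>
    err sv a \<delta> Z \<omega> (the_enat (kdp \<tau> sv a \<delta> Z \<omega>)) \<le> C * (INF k. err sv a \<delta> Z \<omega> k)} \<in> sets M"
proof -
  have ydelta_meas: "(\<lambda>\<omega>. (ydelta sv a \<delta> Z \<omega> j)\<^sup>2) \<in> borel_measurable M" if "j \<ge> 1" for j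
    unfolding ydelta_def using Z_meas[OF that] by measurable
  have [measurable]: "(\<lambda>\<omega>. \<Sum>j\<in>{k<..m}. (ydelta sv a \<delta> Z \<omega> j)\<^sup>2) \<in> borel_measurable M" for k m
    by (rule borel_measurable_sum) (use ydelta_meas in auto)
  have [measurable]: "(\<lambda>\<omega>. kdp_m \<tau> sv a \<delta> Z \<omega> m) \<in> measurable M (count_space UNIV)" for m
    unfolding kdp_m_def by (rule measurable_Least) measurable
  have [measurable]: "(\<lambda>\<omega>. noise_energy Z \<omega> k) \<in> borel_measurable M" for k
    unfolding noise_energy_def by (rule borel_measurable_sum) (use Z_meas in auto)
  have [measurable]: "(\<lambda>\<omega>. err sv a \<delta> Z \<omega> k) \<in> borel_measurable M" for k
  proof -
    have eq: "(\<lambda>\<omega>. err sv a \<delta> Z \<omega> k) = (\<lambda>\<omega>. sqrt (\<delta>\<^sup>2 * noise_energy Z \<omega> k + residual sv a k))"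
      by (simp add: err_eq_sqrt[OF sv_pos summable])
    show ?thesis unfolding eq by measurable
  qed
  have "{\<omega> \<in> space M. kdp \<tau> sv a \<delta> Z \<omega> < \<infinity> \<and>
      err sv a \<delta> Z \<omega> (the_enat (kdp \<tau> sv a \<delta> Z \<omega>)) \<le> C * (INF k. err sv a \<delta> Z \<omega> k)} =
    {\<omega> \<in> space M. \<exists>K. (\<forall>m\<ge>1. kdp_m \<tau> sv a \<delta> Z \<omega> m \<le> K) \<and> (\<exists>m\<ge>1. kdp_m \<tau> sv a \<delta> Z \<omega> m = K) \<and>
      err sv a \<delta> Z \<omega> K \<le> C * (INF k. err sv a \<delta> Z \<omega> k)}"
    by (subst kdp_finite_and_iff) simp
  also have "\<dots> \<in> sets M" by measurable
  finally show ?thesis .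
qed

lemma abs_scaled_sum_eq_sample_mean:
  "\<bar>1 / real \<kappa> * (\<Sum>j=1..n. x j)\<bar> = real n / real \<kappa> * \<bar>sample_mean x n\<bar>"
  unfolding sample_mean_def by (cases "n = 0") (auto simp: abs_mult abs_divide)

lemma sample_mean_sq_minus_one:
  "1 \<le> m \<Longrightarrow> sample_mean (\<lambda>l. (Z l \<omega>)\<^sup>2 - 1) m = (noise_energy Z \<omega> m - m) / m"
  unfolding sample_mean_def noise_energy_def by (simp add: sum_subtractf)

definition noise_tolerance :: "real \<Rightarrow> real" where
  "noise_tolerance \<tau> = min (1 / 3) ((\<tau>\<^sup>2 + 2 * \<tau> - 3) / 4)"

lemma noise_tolerance_pos: "\<tau> > 1 \<Longrightarrow> noise_tolerance \<tau> > 0"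
proof -
  assume "\<tau> > 1"
  then have "0 < (\<tau> - 1) * (\<tau> + 3)" by simp
  then show ?thesis
    unfolding noise_tolerance_def by (simp add: power2_eq_square algebra_simps)
qed

lemma three_div_noise_tolerance:
  assumes "\<tau> > 1"
  shows "3 / noise_tolerance \<tau> = max (12 / (\<tau>\<^sup>2 + 2 * \<tau> - 3)) 9"
proof -
  have q: "\<tau>\<^sup>2 + 2 * \<tau> - 3 > 0"
    using noise_tolerance_pos[OF assms] by (simp add: noise_tolerance_def)
  show ?thesis
    by (cases "1 / 3 \<le> (\<tau>\<^sup>2 + 2 * \<tau> - 3) / 4")
      (use q in \<open>simp_all add: noise_tolerance_def max_def field_simps\<close>)
qed

lemma iid_seq_sq_minus_one:
  fixes Z :: "nat \<Rightarrow> 'w \<Rightarrow> real"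
  assumes M: "prob_space M"
    and Z_meas: "\<And>j. j \<ge> 1 \<Longrightarrow> Z j \<in> borel_measurable M"
    and Z_indep: "prob_space.indep_vars M (\<lambda>_. borel) Z {1..}"
    and Z_distr: "\<And>j. j \<ge> 1 \<Longrightarrow> distr M borel (Z j) = distr M borel (Z 1)"
  shows "iid_seq M (\<lambda>j \<omega>. (Z j \<omega>)\<^sup>2 - 1)"
proof -
  interpret prob_space M by (rule M)
  have sq_meas: "(\<lambda>x. x\<^sup>2 - 1 :: real) \<in> borel_measurable borel" by measurable
  show ?thesis
  proof (unfold_locales)
    show "random_variable borel (\<lambda>\<omega>. (Z j \<omega>)\<^sup>2 - 1)" if "1 \<le> j" for j
      using Z_meas[OF that] by measurable
    show "indep_vars (\<lambda>_. borel) (\<lambda>j \<omega>. (Z j \<omega>)\<^sup>2 - 1) {1..}"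
      using indep_vars_compose2[OF Z_indep, of "\<lambda>_ x. x\<^sup>2 - 1"] sq_meas by simp
    show "distr M borel (\<lambda>\<omega>. (Z j \<omega>)\<^sup>2 - 1) = distr M borel (\<lambda>\<omega>. (Z 1 \<omega>)\<^sup>2 - 1)" if "1 \<le> j" for j
      using distr_distr[OF sq_meas Z_meas[OF that]] distr_distr[OF sq_meas Z_meas[of 1]] Z_distr[OF that]
      by (simp add: comp_def)
  qed
qed

lemma oracle_inequality_if_noise_means_close:
  fixes Z :: "nat \<Rightarrow> 'w \<Rightarrow> real"
  assumes sv_pos: "\<And>j. j \<ge> 1 \<Longrightarrow> sv j > 0"
    and summable: "(\<lambda>j. (ydag sv a j)\<^sup>2) summable_on {1..}"
    and delta: "\<delta> > 0" and tau: "\<tau> > 1"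
    and n: "1 \<le> n" "n \<le> kpr sv a \<delta>" and kpr: "3 \<le> kpr sv a \<delta>"
    and close: "\<And>m. n \<le> m \<Longrightarrow> \<bar>sample_mean (\<lambda>l. (Z l \<omega>)\<^sup>2 - 1) m\<bar> \<le> noise_tolerance \<tau>"
  shows "kdp \<tau> sv a \<delta> Z \<omega> < \<infinity> \<and>
    err sv a \<delta> Z \<omega> (the_enat (kdp \<tau> sv a \<delta> Z \<omega>)) \<le> C_tau \<tau> * (INF k. err sv a \<delta> Z \<omega> k)"
proof -
  have "\<bar>noise_energy Z \<omega> m - m\<bar> \<le> noise_tolerance \<tau> * m" if "n \<le> m" for m
  proof -
    have "1 \<le> m" using n(1) that by simp
    then show ?thesis
      using close[OF that] by (simp add: sample_mean_sq_minus_one abs_divide field_simps)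
  qed
  moreover have "noise_tolerance \<tau> \<le> 1 / 3" "noise_tolerance \<tau> \<le> (\<tau>\<^sup>2 + 2 * \<tau> - 3) / 4"
    unfolding noise_tolerance_def by (simp_all only: min.cobounded1 min.cobounded2)
  ultimately interpret good_noise sv a \<delta> \<tau> "noise_tolerance \<tau>" Z \<omega> n
    using sv_pos summable delta tau n kpr by unfold_locales auto
  show ?thesis by (rule oracle_inequality)
qed

lemma rhs_le_prob_oracle_event:
  fixes Z :: "nat \<Rightarrow> 'w \<Rightarrow> real" and \<kappa> :: nat
  assumes iid: "iid_seq M (\<lambda>j \<omega>. (Z j \<omega>)\<^sup>2 - 1)" and int: "integrable M (\<lambda>\<omega>. (Z 1 \<omega>)\<^sup>2 - 1)"
    and Z_meas: "\<And>j. j \<ge> 1 \<Longrightarrow> Z j \<in> borel_measurable M"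
    and sv_pos: "\<And>j. j \<ge> 1 \<Longrightarrow> sv j > 0"
    and summable: "(\<lambda>j. (ydag sv a j)\<^sup>2) summable_on {1..}"
    and delta: "\<delta> > 0" and tau: "\<tau> > 1" and kappa: "3 \<le> \<kappa>" "\<kappa> \<le> kpr sv a \<delta>"
  shows "rhs M Z \<tau> \<kappa> \<le> measure M {\<omega> \<in> space M. kdp \<tau> sv a \<delta> Z \<omega> < \<infinity> \<and>
    err sv a \<delta> Z \<omega> (the_enat (kdp \<tau> sv a \<delta> Z \<omega>)) \<le> C_tau \<tau> * (INF k. err sv a \<delta> Z \<omega> k)}"
    (is "_ \<le> measure M ?E")
proof -
  interpret iid_seq M "\<lambda>j \<omega>. (Z j \<omega>)\<^sup>2 - 1" by (rule iid)
  define n where "n = nat \<lceil>real \<kappa> / 3\<rceil>"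
  define e where "e = noise_tolerance \<tau>"
  define W where "W = (\<integral>\<omega>. \<bar>sample_mean (\<lambda>l. (Z l \<omega>)\<^sup>2 - 1) n\<bar> \<partial>M)"
  define B where "B = {\<omega> \<in> space M. \<exists>m\<ge>n. e < \<bar>sample_mean (\<lambda>l. (Z l \<omega>)\<^sup>2 - 1) m\<bar>}"
  have n: "1 \<le> n" "n \<le> \<kappa>" "real \<kappa> \<le> 3 * n"
    unfolding n_def using kappa(1) by linarith+
  have e: "0 < e" using noise_tolerance_pos[OF tau] unfolding e_def .
  have E_sets: "?E \<in> sets M" by (rule sets_oracle_event[OF sv_pos summable Z_meas])
  have B_sets: "B \<in> sets M" unfolding B_def by measurable
  have "space M - B \<subseteq> ?E"
  proof
    fix \<omega> assume \<omega>: "\<omega> \<in> space M - B"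
    then have "\<bar>sample_mean (\<lambda>l. (Z l \<omega>)\<^sup>2 - 1) m\<bar> \<le> noise_tolerance \<tau>" if "n \<le> m" for m
      using that unfolding B_def e_def by auto
    then show "\<omega> \<in> ?E"
      using oracle_inequality_if_noise_means_close[OF sv_pos summable delta tau n(1) _ _, of Z \<omega>]
        n kappa \<omega> by auto
  qed
  then have "prob (space M - B) \<le> prob ?E"
    using E_sets by (rule finite_measure_mono)
  then have E_ge: "1 - prob B \<le> prob ?E"
    using finite_measure_compl[OF B_sets] prob_space by simp
  define I where "I = (\<integral>\<omega>. \<bar>1 / real \<kappa> * (\<Sum>j=1..n. (Z j \<omega>)\<^sup>2 - 1)\<bar> \<partial>M)"
  have "W * n / \<kappa> = I"
    unfolding W_def I_def abs_scaled_sum_eq_sample_mean by simp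
  then have "W = I * (\<kappa> / n)"
    using n kappa(1) by (simp add: field_simps)
  also have "\<dots> \<le> I * 3"
    unfolding I_def using n by (intro mult_left_mono) (simp_all add: field_simps)
  finally have "e * prob B \<le> 3 * I"
    using maximal_inequality[OF int n(1) e] unfolding W_def B_def by simp
  then have "prob B \<le> 3 / e * I"
    using e by (simp add: field_simps)
  moreover have "rhs M Z \<tau> \<kappa> = 1 - 3 / e * I"
    unfolding rhs_def I_def n_def e_def three_div_noise_tolerance[OF tau] ..
  ultimately show ?thesis using E_ge by linarith
qed

lemma rhs_tendsto_1:
  fixes Z :: "nat \<Rightarrow> 'w \<Rightarrow> real"
  assumes iid: "iid_seq M (\<lambda>j \<omega>. (Z j \<omega>)\<^sup>2 - 1)" and int: "integrable M (\<lambda>\<omega>. (Z 1 \<omega>)\<^sup>2 - 1)"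
    and mean: "(\<integral>\<omega>. (Z 1 \<omega>)\<^sup>2 - 1 \<partial>M) = 0"
  shows "rhs M Z \<tau> \<longlonglongrightarrow> 1"
proof -
  interpret iid_seq M "\<lambda>j \<omega>. (Z j \<omega>)\<^sup>2 - 1" by (rule iid)
  define W where "W n = (\<integral>\<omega>. \<bar>sample_mean (\<lambda>l. (Z l \<omega>)\<^sup>2 - 1) n\<bar> \<partial>M)" for n
  define I where "I \<kappa> = (\<integral>\<omega>. \<bar>1 / real \<kappa> * (\<Sum>j=1..nat \<lceil>real \<kappa> / 3\<rceil>. (Z j \<omega>)\<^sup>2 - 1)\<bar> \<partial>M)"
    for \<kappa> :: nat
  have "filterlim (\<lambda>\<kappa>::nat. nat \<lceil>real \<kappa> / 3\<rceil>) at_top sequentially"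
    unfolding filterlim_at_top
  proof
    fix N :: nat
    show "\<forall>\<^sub>F \<kappa> in sequentially. N \<le> nat \<lceil>real \<kappa> / 3\<rceil>"
      unfolding eventually_sequentially by (rule exI[of _ "3 * N"]) linarith
  qed
  then have W_lim: "(\<lambda>\<kappa>. W (nat \<lceil>real \<kappa> / 3\<rceil>)) \<longlonglongrightarrow> 0"
    using weak_law_L1[OF int mean] unfolding W_def by (rule filterlim_compose[rotated])
  have I_le: "I \<kappa> \<le> W (nat \<lceil>real \<kappa> / 3\<rceil>)" for \<kappa>
  proof -
    have "\<lceil>real \<kappa> / 3\<rceil> \<le> int \<kappa>" by (simp add: ceiling_le_iff)
    then have "real (nat \<lceil>real \<kappa> / 3\<rceil>) \<le> real \<kappa>" by linarith
    then have "real (nat \<lceil>real \<kappa> / 3\<rceil>) / \<kappa> \<le> 1"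
      by (cases "\<kappa> = 0") (simp_all add: divide_le_eq_1)
    then have "real (nat \<lceil>real \<kappa> / 3\<rceil>) / \<kappa> * W (nat \<lceil>real \<kappa> / 3\<rceil>) \<le> W (nat \<lceil>real \<kappa> / 3\<rceil>)"
      by (intro mult_left_le_one_le) (simp_all add: W_def)
    moreover have "I \<kappa> = real (nat \<lceil>real \<kappa> / 3\<rceil>) / \<kappa> * W (nat \<lceil>real \<kappa> / 3\<rceil>)"
      unfolding I_def W_def abs_scaled_sum_eq_sample_mean by simp
    ultimately show ?thesis by (simp only:)
  qed
  have "I \<kappa> \<ge> 0" for \<kappa> unfolding I_def by simp
  then have "I \<longlonglongrightarrow> 0"
    using I_le by (intro tendsto_sandwich[OF _ _ tendsto_const W_lim]) auto
  then have "(\<lambda>\<kappa>. 1 - max (12 / (\<tau>\<^sup>2 + 2 * \<tau> - 3)) 9 * I \<kappa>) \<longlonglongrightarrow> 1 - max (12 / (\<tau>\<^sup>2 + 2 * \<tau> - 3)) 9 * 0"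
    by (intro tendsto_intros)
  then show ?thesis unfolding rhs_def I_def by simp
qed

theorem theorem1:
  fixes sv :: "nat \<Rightarrow> real" and M :: "'w measure" and Z :: "nat \<Rightarrow> 'w \<Rightarrow> real"
    and \<tau> :: real
  assumes sv_pos: "\<And>j. j \<ge> 1 \<Longrightarrow> sv j > 0"
    and sv_mono: "\<And>i j. 1 \<le> i \<Longrightarrow> i \<le> j \<Longrightarrow> sv j \<le> sv i"
    and sv_lim: "sv \<longlonglongrightarrow> 0"
    and M: "prob_space M"
    and Z_meas: "\<And>j. j \<ge> 1 \<Longrightarrow> Z j \<in> borel_measurable M"
    and Z_indep: "prob_space.indep_vars M (\<lambda>_. borel) Z {1..}"
    and Z_distr: "\<And>j. j \<ge> 1 \<Longrightarrow> distr M borel (Z j) = distr M borel (Z 1)"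
    and Z_sq_int: "\<And>j. j \<ge> 1 \<Longrightarrow> integrable M (\<lambda>\<omega>. (Z j \<omega>)\<^sup>2)"
    and Z_mean: "\<And>j. j \<ge> 1 \<Longrightarrow> (\<integral>\<omega>. Z j \<omega> \<partial>M) = 0"
    and Z_var: "\<And>j. j \<ge> 1 \<Longrightarrow> (\<integral>\<omega>. (Z j \<omega>)\<^sup>2 \<partial>M) = 1"
    and tau: "\<tau> > 1"
  shows "(\<forall>\<kappa>::nat. \<kappa> \<ge> 3 \<longrightarrow>
           (\<forall>\<delta>::real. \<forall>a::nat \<Rightarrow> real.
              \<delta> > 0 \<longrightarrow> (\<lambda>j. (a j)\<^sup>2) summable_on {1..} \<longrightarrow> kpr sv a \<delta> \<ge> \<kappa> \<longrightarrow>
              measure M {\<omega> \<in> space M.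
                  kdp \<tau> sv a \<delta> Z \<omega> < \<infinity> \<and>
                  err sv a \<delta> Z \<omega> (the_enat (kdp \<tau> sv a \<delta> Z \<omega>))
                    \<le> C_tau \<tau> * (INF k. err sv a \<delta> Z \<omega> k)}
                \<ge> rhs M Z \<tau> \<kappa>))
         \<and> (rhs M Z \<tau> \<longlonglongrightarrow> 1)"
proof -
  interpret prob_space M by (rule M)
  have iid: "iid_seq M (\<lambda>j \<omega>. (Z j \<omega>)\<^sup>2 - 1)"
    by (rule iid_seq_sq_minus_one[OF M Z_meas Z_indep Z_distr])
  have int: "integrable M (\<lambda>\<omega>. (Z 1 \<omega>)\<^sup>2 - 1)" and mean: "(\<integral>\<omega>. (Z 1 \<omega>)\<^sup>2 - 1 \<partial>M) = 0"
    using Z_sq_int[of 1] Z_var[of 1] by (simp_all add: prob_space)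
  show ?thesis
    using rhs_le_prob_oracle_event[OF iid int Z_meas sv_pos summable_on_ydag_sq[OF sv_pos sv_mono] _ tau]
      rhs_tendsto_1[OF iid int mean] by auto
qed

end
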